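(* Let $\gamma>0$ and $p\in[2,\infty]$. For every $t>0$, $e^{(i+\gamma)tH}$ maps $L^p(\mathbb{R})$ into $L^2(\mathbb{R})$, and there exists a constant $C_{\gamma,p}$ such that for all $t>0$ and all $f\in L^p(\mathbb{R})$, $$|e^{(i+\gamma)tH}f|_{L^2(\mathbb{R})}\le C_{\gamma,p}\,t^{-\frac12+\frac1p}|f|_{L^p(\mathbb{R})}.$$
   Context: $H=\partial_x^2-x^2$, self-adjoint on $L^2(\mathbb{R};\mathbb{C})$ with spectrum $\{-(2n+1):n\ge0\}$; $e^{(i+\gamma)tH}$ is the associated semigroup. *)

theory Defs
  imports "HOL-Analysis.Analysis" "HOL-Probability.Essential_Supremum"
begin

fun hermite_poly :: "nat \<Rightarrow> real \<Rightarrow> real" where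
  "hermite_poly 0 x = 1"
| "hermite_poly (Suc 0) x = 2 * x"
| "hermite_poly (Suc (Suc n)) x =
     2 * x * hermite_poly (Suc n) x - 2 * real (Suc n) * hermite_poly n x"

text \<open>L^2-normalised Hermite functions; H h_n = -(2n+1) h_n for H = d^2/dx^2 - x^2.
  They form an orthonormal eigenbasis of L^2(R).\<close>
definition hermite_fun :: "nat \<Rightarrow> real \<Rightarrow> real" where
  "hermite_fun n x =
     hermite_poly n x * exp (- (x^2) / 2) / sqrt (2 ^ n * fact n * sqrt pi)"

text \<open>Hermite coefficient of f (well defined for f in L^p, since h_n is Schwartz).\<close>
definition hermite_coeff :: "(real \<Rightarrow> complex) \<Rightarrow> nat \<Rightarrow> complex" where
  "hermite_coeff f n = integral\<^sup>L lborel (\<lambda>x. f x * complex_of_real (hermite_fun n x))"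

definition memLp :: "ereal \<Rightarrow> (real \<Rightarrow> complex) \<Rightarrow> bool" where
  "memLp p f \<longleftrightarrow> f \<in> borel_measurable lborel \<and>
     (if p = \<infinity> then esssup lborel (\<lambda>x. ereal (norm (f x))) < \<infinity>
      else integrable lborel (\<lambda>x. norm (f x) powr real_of_ereal p))"

definition Lp_norm :: "ereal \<Rightarrow> (real \<Rightarrow> complex) \<Rightarrow> real" where
  "Lp_norm p f =
     (if p = \<infinity> then real_of_ereal (esssup lborel (\<lambda>x. ereal (norm (f x))))
      else (integral\<^sup>L lborel (\<lambda>x. norm (f x) powr real_of_ereal p))
             powr (1 / real_of_ereal p))"

definition inv_exp :: "ereal \<Rightarrow> real" where
  "inv_exp p = (if p = \<infinity> then 0 else 1 / real_of_ereal p)"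

text \<open>Spectral definition of e^(zH) applied to f: the function g in L^2 which is the
  L^2 limit of the partial sums  sum_(n<N) e^(-z(2n+1)) <f,h_n> h_n .\<close>
definition semigroup_image :: "complex \<Rightarrow> (real \<Rightarrow> complex) \<Rightarrow> (real \<Rightarrow> complex) \<Rightarrow> bool" where
  "semigroup_image z f g \<longleftrightarrow> memLp 2 g \<and>
     (\<lambda>N. Lp_norm 2 (\<lambda>x. g x - (\<Sum>n<N. exp (- z * of_nat (2 * n + 1)) *
                          hermite_coeff f n * complex_of_real (hermite_fun n x))))
       \<longlonglongrightarrow> 0"

end

theory Submission
  imports Defs "HOL-Probability.Distributions"
begin

(* By orthonormality of the Hermite functions h_n, the L^2 norm of e^{zH} f is
   (sum_n e^{-2s(2n+1)} |<f,h_n>|^2)^{1/2} with s = Re z.  Split f at |x| = R = 1/s.  The inner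
   part has L^2 norm at most |f|_p (2R)^{1/2-1/p} by Hoelder, and Bessel's inequality bounds its
   coefficients.  For the outer part, Cauchy-Schwarz against (1 + x^2) h_n, whose L^2 norm is O(n)
   by the three-term recurrence, bounds each coefficient by O(n) times the L^2 norm of
   f / (1 + x^2) on |x| > R, which Hoelder makes O(|f|_p R^{-3/2-1/p}); the damping factors then
   sum to O(s^{-4}) against n^2.  Both parts give s^{-1+2/p} for the squared norm. *)

section \<open>Hermite polynomials and Hermite functions\<close>

lemma hermite_poly_Suc:
  "hermite_poly (Suc m) x = 2 * x * hermite_poly m x - 2 * real m * hermite_poly (m - 1) x"
  by (cases m) simp_all

lemma x_mult_hermite_poly:
  "x * hermite_poly n x = hermite_poly (Suc n) x / 2 + real n * hermite_poly (n - 1) x"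
  by (simp add: hermite_poly_Suc field_simps)

lemma one_plus_sq_mult_hermite_poly:
  "(1 + x^2) * hermite_poly n x = hermite_poly (n + 2) x / 4 + (real n + 3/2) * hermite_poly n x
     + real n * (real n - 1) * hermite_poly (n - 2) x"
proof -
  have shift: "x * hermite_poly (Suc n) x = hermite_poly (n + 2) x / 2 + real (Suc n) * hermite_poly n x"
    using x_mult_hermite_poly[of x "Suc n"] by simp
  have lower: "real n * (x * hermite_poly (n - 1) x)
      = real n * (hermite_poly n x / 2 + (real n - 1) * hermite_poly (n - 2) x)"
  proof (cases n)
    case (Suc m)
    then show ?thesis using x_mult_hermite_poly[of x m] by (simp add: of_nat_diff)
  qed simp
  have "(1 + x^2) * hermite_poly n x = hermite_poly n x + x * (x * hermite_poly n x)"
    by (simp add: algebra_simps power2_eq_square)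
  also have "\<dots> = hermite_poly n x + x * hermite_poly (Suc n) x / 2 + real n * (x * hermite_poly (n - 1) x)"
    by (subst x_mult_hermite_poly) (simp add: algebra_simps)
  finally show ?thesis
    unfolding shift lower by (simp add: field_simps del: hermite_poly.simps)
qed

lemma continuous_on_hermite_poly: "continuous_on UNIV (hermite_poly n)"
  by (induction n rule: induct_nat_012) (auto intro!: continuous_intros)

lemma borel_measurable_hermite_poly [measurable]: "hermite_poly n \<in> borel_measurable borel"
  using continuous_on_hermite_poly by (rule borel_measurable_continuous_onI)

definition gauss_moment :: "nat \<Rightarrow> real" where
  "gauss_moment k = (\<integral>x. x^k * exp (-(x^2)) \<partial>lborel)"

lemma has_bochner_integral_gauss_moment_even:
  "has_bochner_integral lborel (\<lambda>x::real. x^(2*k) * exp (-(x^2)))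
     (sqrt pi * (fact (2 * k) / (2 ^ (2 * k) * fact k)))"
proof -
  have "has_bochner_integral lborel (\<lambda>x::real. exp (-x\<^sup>2) * x^(2 * k))
      (2 *\<^sub>R ((sqrt pi / 2) * (fact (2 * k) / (2 ^ (2 * k) * fact k))))"
    by (rule has_bochner_integral_even_function[OF gaussian_moment_even_pos]) simp
  then show ?thesis by (simp add: mult.commute)
qed

lemma has_bochner_integral_gauss_moment_odd:
  "has_bochner_integral lborel (\<lambda>x::real. x^(2*k+1) * exp (-(x^2))) 0"
proof -
  have "has_bochner_integral lborel (\<lambda>x::real. exp (-x\<^sup>2) * x^(2 * k + 1)) 0"
    by (rule has_bochner_integral_odd_function[OF gaussian_moment_odd_pos]) simp
  then show ?thesis by (simp add: mult.commute)
qed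

lemma integrable_gauss_moment: "integrable lborel (\<lambda>x::real. x^k * exp (-(x^2)))"
proof (cases "even k")
  case True
  then obtain j where "k = 2 * j" by blast
  then show ?thesis using has_bochner_integral_gauss_moment_even[of j] by (simp add: integrable.intros)
next
  case False
  then obtain j where "k = 2 * j + 1" using oddE by blast
  then show ?thesis using has_bochner_integral_gauss_moment_odd[of j] by (simp add: integrable.intros)
qed

lemma gauss_moment_even: "gauss_moment (2 * j) = sqrt pi * (fact (2 * j) / (2 ^ (2 * j) * fact j))"
  using has_bochner_integral_gauss_moment_even unfolding gauss_moment_def
  by (rule has_bochner_integral_integral_eq)

lemma gauss_moment_odd: "odd k \<Longrightarrow> gauss_moment k = 0"
  using has_bochner_integral_gauss_moment_odd unfolding gauss_moment_def
  by (metis oddE has_bochner_integral_integral_eq)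

lemma gauss_moment_0: "gauss_moment 0 = sqrt pi"
  using gauss_moment_even[of 0] by simp

lemma gauss_moment_Suc_Suc: "gauss_moment (Suc (Suc k)) = (real k + 1) / 2 * gauss_moment k"
proof (cases "even k")
  case True
  then obtain j where k: "k = 2 * j" by blast
  have "gauss_moment (Suc (Suc k)) = gauss_moment (2 * (j + 1))" using k by simp
  also have "\<dots> = (real k + 1) / 2 * (sqrt pi * (fact (2 * j) / (2 ^ (2 * j) * fact j)))"
  proof -
    have num: "fact (2 * (j + 1)) = (real j + 1) * (2 * (2 * real j + 1) * fact (2 * j))"
      by (simp add: fact_Suc algebra_simps)
    have den: "(2::real) ^ (2 * (j + 1)) * fact (j + 1) = (real j + 1) * (4 * 2 ^ (2 * j) * fact j)"
      by (simp add: power_add algebra_simps)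
    have "fact (2 * (j + 1)) / (2 ^ (2 * (j + 1)) * fact (j + 1))
        = (2 * (2 * real j + 1) * fact (2 * j)) / (4 * 2 ^ (2 * j) * fact j :: real)"
      unfolding num den by (rule mult_divide_mult_cancel_left) simp
    also have "\<dots> = (2 * real j + 1) / 2 * (fact (2 * j) / (2 ^ (2 * j) * fact j))"
      by (simp add: field_simps)
    finally have "fact (2 * (j + 1)) / (2 ^ (2 * (j + 1)) * fact (j + 1))
        = (2 * real j + 1) / 2 * (fact (2 * j) / (2 ^ (2 * j) * fact j) :: real)" .
    then show ?thesis unfolding gauss_moment_even k by simp
  qed
  finally show ?thesis using k gauss_moment_even by simp
qed (simp add: gauss_moment_odd)

lemma integrable_hermite_poly_gauss:
  "integrable lborel (\<lambda>x. hermite_poly n x * x^k * exp (-(x^2)))"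
proof (induction n arbitrary: k rule: induct_nat_012)
  case 0
  then show ?case using integrable_gauss_moment by simp
next
  case 1
  have "integrable lborel (\<lambda>x::real. 2 * (x^(Suc k) * exp (-(x^2))))"
    using integrable_gauss_moment[of "Suc k"] by simp
  then show ?case by (simp add: algebra_simps)
next
  case (ge2 n)
  have "integrable lborel (\<lambda>x. 2 * (hermite_poly (Suc n) x * x^(Suc k) * exp (-(x^2)))
          - 2 * real (Suc n) * (hermite_poly n x * x^k * exp (-(x^2))))"
    using ge2.IH(1)[of k] ge2.IH(2)[of "Suc k"] by (intro Bochner_Integration.integrable_diff integrable_mult_right)
  then show ?case by (simp add: algebra_simps)
qed

lemma integral_hermite_poly_monomial_gauss:
  "(\<integral>x. hermite_poly n x * x^k * exp (-(x^2)) \<partial>lborel)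
     = (if n \<le> k then fact k / fact (k - n) * gauss_moment (k - n) else 0)"
proof (induction n arbitrary: k rule: induct_nat_012)
  case 0
  then show ?case by (simp add: gauss_moment_def)
next
  case 1
  have "(\<integral>x. hermite_poly (Suc 0) x * x^k * exp (-(x^2)) \<partial>lborel)
      = (\<integral>x. 2 * (x^(Suc k) * exp (-(x^2))) \<partial>lborel)"
    by (rule Bochner_Integration.integral_cong) (auto simp: algebra_simps)
  also have "\<dots> = 2 * gauss_moment (Suc k)"
    unfolding gauss_moment_def by (rule integral_mult_right_zero)
  also have "\<dots> = (if Suc 0 \<le> k then fact k / fact (k - Suc 0) * gauss_moment (k - Suc 0) else 0)"
    by (cases k) (simp_all add: gauss_moment_odd gauss_moment_Suc_Suc)
  finally show ?case .
next
  case (ge2 n)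
  have "(\<integral>x. hermite_poly (Suc (Suc n)) x * x^k * exp (-(x^2)) \<partial>lborel)
      = (\<integral>x. 2 * (hermite_poly (Suc n) x * x^(Suc k) * exp (-(x^2)))
            - 2 * real (Suc n) * (hermite_poly n x * x^k * exp (-(x^2))) \<partial>lborel)"
    by (rule Bochner_Integration.integral_cong) (auto simp: algebra_simps)
  also have "\<dots> = 2 * (\<integral>x. hermite_poly (Suc n) x * x^(Suc k) * exp (-(x^2)) \<partial>lborel)
      - 2 * real (Suc n) * (\<integral>x. hermite_poly n x * x^k * exp (-(x^2)) \<partial>lborel)"
    using integrable_hermite_poly_gauss[of "Suc n" "Suc k"] integrable_hermite_poly_gauss[of n k]
    by simp
  finally have rec: "(\<integral>x. hermite_poly (Suc (Suc n)) x * x^k * exp (-(x^2)) \<partial>lborel)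
      = 2 * (if n \<le> k then fact (Suc k) / fact (k - n) * gauss_moment (k - n) else 0)
        - 2 * real (Suc n) * (if n \<le> k then fact k / fact (k - n) * gauss_moment (k - n) else 0)"
    unfolding ge2 by simp
  consider "k < Suc (Suc n)" | d where "k = Suc (Suc n) + d" using le_Suc_ex by (metis not_le)
  then show ?case
  proof cases
    case 1
    then consider "k < n" | "k = n" | "k = Suc n" by linarith
    then show ?thesis
      unfolding rec by cases (auto simp: gauss_moment_odd)
  next
    case (2 d)
    have "(real d + 1) * (real d + 2) \<noteq> 0" by simp
    then show ?thesis
      using 2 unfolding rec
      by (simp add: gauss_moment_Suc_Suc fact_Suc divide_simps) (simp add: algebra_simps)
  qed
qed

lemma integrable_hermite_poly_pair_gauss:
  "integrable lborel (\<lambda>x. hermite_poly n x * hermite_poly m x * x^k * exp (-(x^2)))"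
proof (induction m arbitrary: k rule: induct_nat_012)
  case 0
  then show ?case using integrable_hermite_poly_gauss[of n k] by simp
next
  case 1
  have "integrable lborel (\<lambda>x. 2 * (hermite_poly n x * x^(Suc k) * exp (-(x^2))))"
    using integrable_hermite_poly_gauss[of n "Suc k"] by simp
  then show ?case by (simp add: algebra_simps)
next
  case (ge2 m)
  have "integrable lborel (\<lambda>x. 2 * (hermite_poly n x * hermite_poly (Suc m) x * x^(Suc k) * exp (-(x^2)))
      - 2 * real (Suc m) * (hermite_poly n x * hermite_poly m x * x^k * exp (-(x^2))))"
    using ge2.IH(1)[of k] ge2.IH(2)[of "Suc k"]
    by (intro Bochner_Integration.integrable_diff integrable_mult_right)
  then show ?case by (simp add: algebra_simps)
qed

definition hermite_sq_norm :: "nat \<Rightarrow> real" where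
  "hermite_sq_norm n = 2^n * fact n * sqrt pi"

lemma hermite_sq_norm_pos: "hermite_sq_norm n > 0"
  unfolding hermite_sq_norm_def by simp

lemma hermite_sq_norm_Suc: "hermite_sq_norm (Suc n) = 2 * (real n + 1) * hermite_sq_norm n"
  unfolding hermite_sq_norm_def by (simp add: algebra_simps)

text \<open>Both three-term recurrences, applied to the two factors.\<close>
lemma hermite_poly_mult_Suc:
  "hermite_poly n x * hermite_poly (Suc m) x
     = hermite_poly (Suc n) x * hermite_poly m x + 2 * real n * (hermite_poly (n - 1) x * hermite_poly m x)
       - 2 * real m * (hermite_poly n x * hermite_poly (m - 1) x)"
proof -
  have "hermite_poly n x * hermite_poly (Suc m) x
      = 2 * (x * hermite_poly n x) * hermite_poly m x - 2 * real m * hermite_poly n x * hermite_poly (m - 1) x"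
    by (simp only: hermite_poly_Suc) (simp add: algebra_simps)
  then show ?thesis by (simp only: x_mult_hermite_poly) (simp add: algebra_simps)
qed

lemma integral_hermite_poly_pair_gauss:
  "(\<integral>x. hermite_poly n x * hermite_poly m x * exp (-(x^2)) \<partial>lborel)
     = (if n = m then hermite_sq_norm n else 0)"
proof -
  define I where "I n m = (\<integral>x. hermite_poly n x * hermite_poly m x * exp (-(x^2)) \<partial>lborel)" for n m
  have integrable: "integrable lborel (\<lambda>x. hermite_poly n x * hermite_poly m x * exp (-(x^2)))" for n m
    using integrable_hermite_poly_pair_gauss[of n m 0] by simp
  have rec: "I n (Suc m) = I (Suc n) m + 2 * real n * I (n - 1) m - 2 * real m * I n (m - 1)" for n m
  proof -
    have "I n (Suc m) = (\<integral>x. hermite_poly (Suc n) x * hermite_poly m x * exp (-(x^2))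
        + 2 * real n * (hermite_poly (n - 1) x * hermite_poly m x * exp (-(x^2)))
        - 2 * real m * (hermite_poly n x * hermite_poly (m - 1) x * exp (-(x^2))) \<partial>lborel)"
      unfolding I_def
    proof (rule Bochner_Integration.integral_cong[OF refl])
      fix x
      show "hermite_poly n x * hermite_poly (Suc m) x * exp (-(x^2))
          = hermite_poly (Suc n) x * hermite_poly m x * exp (-(x^2))
            + 2 * real n * (hermite_poly (n - 1) x * hermite_poly m x * exp (-(x^2)))
            - 2 * real m * (hermite_poly n x * hermite_poly (m - 1) x * exp (-(x^2)))"
        using arg_cong[OF hermite_poly_mult_Suc[of n x m], of "\<lambda>y. y * exp (-(x^2))"]
        by (simp add: algebra_simps)
    qed
    then show ?thesis unfolding I_def using integrable by simp
  qed
  have "I n m = (if n = m then hermite_sq_norm n else 0)" for n m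
  proof (induction m arbitrary: n rule: less_induct)
    case (less m)
    show ?case
    proof (cases m)
      case 0
      then show ?thesis unfolding I_def
        using integral_hermite_poly_monomial_gauss[of n 0]
        by (simp add: gauss_moment_0 hermite_sq_norm_def)
    next
      case (Suc j)
      have IH1: "I a j = (if a = j then hermite_sq_norm a else 0)" for a
        using less[of j] Suc by simp
      have IH2: "I a (j - 1) = (if a = j - 1 then hermite_sq_norm a else 0)" for a
        using less[of "j - 1"] Suc by simp
      consider "n = Suc j" | "Suc n = j" | "n \<noteq> Suc j" "Suc n \<noteq> j" by blast
      then show ?thesis
      proof cases
        case 1
        moreover have "Suc j \<noteq> j - 1" by simp
        ultimately show ?thesis using rec[of n j] IH1 IH2 Suc by (simp add: hermite_sq_norm_Suc)
      next
        case 2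
        then show ?thesis using rec[of n j] IH1 IH2 Suc hermite_sq_norm_Suc[of n] by auto
      next
        case 3
        then show ?thesis using rec[of n j] IH1 IH2 Suc by (cases n; cases j) auto
      qed
    qed
  qed
  then show ?thesis unfolding I_def .
qed

lemma borel_measurable_hermite_fun [measurable]: "hermite_fun n \<in> borel_measurable borel"
  unfolding hermite_fun_def[abs_def] by measurable

lemma hermite_fun_mult:
  "hermite_fun n x * hermite_fun m x = hermite_poly n x * hermite_poly m x * exp (-(x^2))
     / (sqrt (hermite_sq_norm n) * sqrt (hermite_sq_norm m))"
proof -
  have "exp (- (x^2) / 2) * exp (- (x^2) / 2) = exp (-(x^2))" by (simp flip: exp_add)
  then show ?thesis unfolding hermite_fun_def hermite_sq_norm_def by (simp add: field_simps)
qed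

lemma hermite_fun_sq: "(hermite_fun n x)^2 = (hermite_poly n x)^2 * exp (-(x^2)) / hermite_sq_norm n"
  using hermite_fun_mult[of n x n] hermite_sq_norm_pos[of n] by (simp add: power2_eq_square)

lemma integrable_hermite_fun_mult: "integrable lborel (\<lambda>x. hermite_fun n x * hermite_fun m x)"
  unfolding hermite_fun_mult using integrable_hermite_poly_pair_gauss[of n m 0] by simp

lemma integral_hermite_fun_mult:
  "(\<integral>x. hermite_fun n x * hermite_fun m x \<partial>lborel) = (if n = m then 1 else 0)"
  unfolding hermite_fun_mult using hermite_sq_norm_pos[of n] hermite_sq_norm_pos[of m]
  by (simp add: integral_hermite_poly_pair_gauss)

lemma integrable_hermite_fun_sq: "integrable lborel (\<lambda>x. (hermite_fun n x)^2)"
  using integrable_hermite_fun_mult[of n n] by (simp add: power2_eq_square)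

lemma integral_hermite_fun_sq: "(\<integral>x. (hermite_fun n x)^2 \<partial>lborel) = 1"
  using integral_hermite_fun_mult[of n n] by (simp add: power2_eq_square)

lemma integrable_weighted_hermite_fun_sq:
  "integrable lborel (\<lambda>x. ((1 + x^2) * hermite_fun n x)^2)"
proof -
  let ?P = "\<lambda>k x. hermite_poly n x * hermite_poly n x * x^k * exp (-(x^2))"
  have "((1 + x^2) * hermite_fun n x)^2 = (?P 0 x + 2 * ?P 2 x + ?P 4 x) / hermite_sq_norm n" for x
  proof -
    have "((1::real) + x^2)^2 = 1 + 2 * x^2 + x^4"
      by (simp add: power2_eq_square power4_eq_xxxx algebra_simps)
    then have "((1 + x^2) * hermite_fun n x)^2
        = (1 + 2 * x^2 + x^4) * ((hermite_poly n x)^2 * exp (-(x^2)) / hermite_sq_norm n)"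
      by (simp add: power_mult_distrib hermite_fun_sq)
    then show ?thesis by (simp add: power2_eq_square algebra_simps add_divide_distrib)
  qed
  moreover have "integrable lborel (\<lambda>x. (?P 0 x + 2 * ?P 2 x + ?P 4 x) / hermite_sq_norm n)"
    using integrable_hermite_poly_pair_gauss[of n n 0] integrable_hermite_poly_pair_gauss[of n n 2]
      integrable_hermite_poly_pair_gauss[of n n 4] by auto
  ultimately show ?thesis by simp
qed

lemma sq_sum3_le: "(u + v + w)^2 \<le> 3 * (u^2 + v^2 + w^2)" for u v w :: real
proof -
  have "3 * (u^2 + v^2 + w^2) - (u + v + w)^2 = (u - v)^2 + (v - w)^2 + (u - w)^2"
    by (simp add: power2_eq_square algebra_simps)
  then show ?thesis by (smt (verit) zero_le_power2)
qed

lemma hermite_sq_norm_add_2: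
  "hermite_sq_norm (n + 2) = 4 * (real n + 1) * (real n + 2) * hermite_sq_norm n"
  using hermite_sq_norm_Suc[of "Suc n"] hermite_sq_norm_Suc[of n] by (simp add: algebra_simps)

lemma hermite_sq_norm_diff_2_le:
  "(real n * (real n - 1))^2 * hermite_sq_norm (n - 2) \<le> real n * (real n - 1) / 4 * hermite_sq_norm n"
proof (cases "n \<ge> 2")
  case True
  then obtain k where k: "n = k + 2" using le_Suc_ex by (metis add.commute)
  have norm: "hermite_sq_norm n = 4 * ((real k + 2) * (real k + 1)) * hermite_sq_norm k"
    using hermite_sq_norm_add_2[of k] k by (simp add: algebra_simps)
  have "real n * (real n - 1) = (real k + 2) * (real k + 1)" using k by (simp add: algebra_simps)
  moreover have "n - 2 = k" using k by simp
  ultimately show ?thesis unfolding norm by (simp add: power2_eq_square)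
next
  case False
  then have "n = 0 \<or> n = 1" by auto
  then show ?thesis by auto
qed

text \<open>By the three-term recurrence, (1 + x^2) h_n is a combination of h_(n+2), h_n and h_(n-2)
  whose coefficients are O(n).\<close>
lemma integral_weighted_hermite_fun_sq_le:
  "(\<integral>x. ((1 + x^2) * hermite_fun n x)^2 \<partial>lborel) \<le> 5 * (real n + 2)^2"
proof -
  let ?E = "\<lambda>x. exp (-(x^2))"
  define a where "a x = (1/16) * ((hermite_poly (n+2) x)^2 * ?E x)
      + (real n + 3/2)^2 * ((hermite_poly n x)^2 * ?E x)
      + (real n * (real n - 1))^2 * ((hermite_poly (n-2) x)^2 * ?E x)" for x
  have pointwise: "((1 + x^2) * hermite_fun n x)^2 \<le> 3 * a x / hermite_sq_norm n" for x
  proof -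
    have "((1 + x^2) * hermite_fun n x)^2 = ((1 + x^2) * hermite_poly n x)^2 * ?E x / hermite_sq_norm n"
      by (simp add: power_mult_distrib hermite_fun_sq)
    also have "\<dots> = (hermite_poly (n+2) x / 4 + (real n + 3/2) * hermite_poly n x
        + real n * (real n - 1) * hermite_poly (n - 2) x)^2 * ?E x / hermite_sq_norm n"
      by (simp only: one_plus_sq_mult_hermite_poly)
    also have "\<dots> \<le> 3 * ((hermite_poly (n+2) x / 4)^2 + ((real n + 3/2) * hermite_poly n x)^2
        + (real n * (real n - 1) * hermite_poly (n - 2) x)^2) * ?E x / hermite_sq_norm n"
      using hermite_sq_norm_pos[of n]
      by (intro divide_right_mono mult_right_mono sq_sum3_le) auto
    also have "\<dots> = 3 * a x / hermite_sq_norm n"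
      by (simp only: a_def power_mult_distrib power_divide) (simp add: algebra_simps)
    finally show ?thesis .
  qed
  have sq_integrable: "integrable lborel (\<lambda>x. (hermite_poly k x)^2 * ?E x)" for k
    using integrable_hermite_poly_pair_gauss[of k k 0] by (simp add: power2_eq_square)
  have sq_integral: "(\<integral>x. (hermite_poly k x)^2 * ?E x \<partial>lborel) = hermite_sq_norm k" for k
    using integral_hermite_poly_pair_gauss[of k k] by (simp add: power2_eq_square)
  have "integrable lborel a"
    unfolding a_def by (intro Bochner_Integration.integrable_add integrable_mult_right sq_integrable)
  then have "(\<integral>x. ((1 + x^2) * hermite_fun n x)^2 \<partial>lborel) \<le> (\<integral>x. 3 * a x / hermite_sq_norm n \<partial>lborel)"
    using pointwise integrable_weighted_hermite_fun_sq by (intro integral_mono) auto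
  also have "\<dots> = 3 * ((1/16) * hermite_sq_norm (n+2) + (real n + 3/2)^2 * hermite_sq_norm n
      + (real n * (real n - 1))^2 * hermite_sq_norm (n-2)) / hermite_sq_norm n"
    unfolding a_def using sq_integrable by (simp add: sq_integral del: hermite_poly.simps)
  also have "\<dots> \<le> 3 * ((1/16) * hermite_sq_norm (n+2) + (real n + 3/2)^2 * hermite_sq_norm n
      + real n * (real n - 1) / 4 * hermite_sq_norm n) / hermite_sq_norm n"
    using hermite_sq_norm_diff_2_le[of n] hermite_sq_norm_pos[of n]
    by (intro divide_right_mono mult_left_mono add_left_mono) auto
  also have "\<dots> = 3 * ((real n + 1) * (real n + 2) / 4 + (real n + 3/2)^2 + real n * (real n - 1) / 4)"
    using hermite_sq_norm_pos[of n] unfolding hermite_sq_norm_add_2 by (simp add: field_simps)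
  also have "\<dots> \<le> 5 * (real n + 2)^2"
    by (simp add: power2_eq_square field_simps)
  finally show ?thesis .
qed

section \<open>Integral inequalities\<close>

lemma norm_add_sq_le:
  fixes a b :: "'a::real_normed_vector"
  shows "(norm (a + b))^2 \<le> 2 * (norm a)^2 + 2 * (norm b)^2"
proof -
  have "(norm (a + b))^2 \<le> (norm a + norm b)^2"
    by (intro power_mono norm_triangle_ineq) simp
  also have "\<dots> \<le> 2 * (norm a)^2 + 2 * (norm b)^2"
    using zero_le_power2[of "norm a - norm b"] by (simp add: power2_eq_square algebra_simps)
  finally show ?thesis .
qed

lemma integrable_nonneg_le:
  fixes f g :: "'a \<Rightarrow> real"
  assumes "integrable M g" "f \<in> borel_measurable M" "\<And>x. 0 \<le> f x" "\<And>x. f x \<le> g x"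
  shows "integrable M f"
proof (rule Bochner_Integration.integrable_bound[OF assms(1,2)])
  show "AE x in M. norm (f x) \<le> norm (g x)"
    using assms(3,4) by (intro AE_I2) (metis abs_of_nonneg order_trans real_norm_def)
qed

lemma integral_Holder_inequality:
  fixes u w :: "'a \<Rightarrow> real"
  assumes [measurable]: "u \<in> borel_measurable M" "w \<in> borel_measurable M"
    and u0: "\<And>x. 0 \<le> u x" and w0: "\<And>x. 0 \<le> w x"
    and P: "P > 1" and Q: "Q > 1" and PQ: "1/P + 1/Q = 1"
    and iu: "integrable M (\<lambda>x. u x powr P)" and iw: "integrable M (\<lambda>x. w x powr Q)"
  shows "integrable M (\<lambda>x. u x * w x)"
    and "(\<integral>x. u x * w x \<partial>M) \<le> (\<integral>x. u x powr P \<partial>M) powr (1/P) * (\<integral>x. w x powr Q \<partial>M) powr (1/Q)"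
proof -
  define A where "A = (\<integral>x. u x powr P \<partial>M)"
  define B where "B = (\<integral>x. w x powr Q \<partial>M)"
  have A0: "A \<ge> 0" unfolding A_def by (intro integral_nonneg_AE) auto
  have B0: "B \<ge> 0" unfolding B_def by (intro integral_nonneg_AE) auto
  have "integrable M (\<lambda>x. u x * w x) \<and> (\<integral>x. u x * w x \<partial>M) \<le> A powr (1/P) * B powr (1/Q)"
  proof (cases "A = 0 \<or> B = 0")
    case True
    then have AE_zero: "AE x in M. u x * w x = 0"
    proof
      assume "A = 0"
      then have "AE x in M. u x powr P = 0" using iu unfolding A_def
        by (subst (asm) integral_nonneg_eq_0_iff_AE) auto
      then show ?thesis by eventually_elim (use P in auto)
    next
      assume "B = 0"
      then have "AE x in M. w x powr Q = 0" using iw unfolding B_def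
        by (subst (asm) integral_nonneg_eq_0_iff_AE) auto
      then show ?thesis by eventually_elim (use Q in auto)
    qed
    have "integrable M (\<lambda>x. u x * w x)"
    proof (rule integrable_cong_AE_imp[where g="\<lambda>x. 0"])
      show "AE x in M. 0 = u x * w x" using AE_zero by eventually_elim simp
    qed auto
    moreover have "(\<integral>x. u x * w x \<partial>M) = (\<integral>x. 0 \<partial>M)"
      using AE_zero by (intro integral_cong_AE) auto
    ultimately show ?thesis using A0 B0 by simp
  next
    case False
    then have Ap: "A > 0" and Bp: "B > 0" using A0 B0 by auto
    define a where "a = A powr (1/P)"
    define b where "b = B powr (1/Q)"
    have ap: "a > 0" and bp: "b > 0" unfolding a_def b_def using Ap Bp by auto
    have apP: "a powr P = A" unfolding a_def using Ap P by (simp add: powr_powr)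
    have bpQ: "b powr Q = B" unfolding b_def using Bp Q by (simp add: powr_powr)
    define bound where "bound x = a * b * (u x powr P / (P * A) + w x powr Q / (Q * B))" for x
    have pointwise: "u x * w x \<le> bound x" for x
    proof -
      have "(u x / a) * (w x / b) \<le> (u x / a) powr P / P + (w x / b) powr Q / Q"
        by (rule Youngs_inequality) (use P Q PQ u0 w0 ap bp in auto)
      also have "\<dots> = u x powr P / (P * A) + w x powr Q / (Q * B)"
        using ap bp u0 w0 by (simp add: powr_divide apP bpQ mult.commute)
      finally show ?thesis unfolding bound_def using ap bp by (simp add: field_simps)
    qed
    have bound_integrable: "integrable M bound"
      unfolding bound_def using iu iw by auto
    have integrable: "integrable M (\<lambda>x. u x * w x)"
    proof (rule Bochner_Integration.integrable_bound[OF bound_integrable])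
      show "AE x in M. norm (u x * w x) \<le> norm (bound x)"
        using pointwise u0 w0 by (intro AE_I2) (metis abs_of_nonneg mult_nonneg_nonneg order_trans real_norm_def)
    qed simp
    have "(\<integral>x. u x * w x \<partial>M) \<le> (\<integral>x. bound x \<partial>M)"
      using integrable bound_integrable pointwise by (rule integral_mono)
    also have "\<dots> = a * b * (A / (P * A) + B / (Q * B))"
      using iu iw unfolding bound_def A_def B_def by simp
    also have "\<dots> = a * b" using Ap Bp PQ by simp
    finally show ?thesis using integrable unfolding a_def b_def by simp
  qed
  then show "integrable M (\<lambda>x. u x * w x)"
    and "(\<integral>x. u x * w x \<partial>M) \<le> (\<integral>x. u x powr P \<partial>M) powr (1/P) * (\<integral>x. w x powr Q \<partial>M) powr (1/Q)"
    unfolding A_def B_def by auto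
qed

lemma powr_two_nonneg: "0 \<le> (x::real) \<Longrightarrow> x powr 2 = x^2"
  by (cases "x = 0") (simp_all add: powr_realpow[of x 2, simplified])

lemma integral_Cauchy_Schwarz:
  fixes u w :: "'a \<Rightarrow> real"
  assumes [measurable]: "u \<in> borel_measurable M" "w \<in> borel_measurable M"
    and u0: "\<And>x. 0 \<le> u x" and w0: "\<And>x. 0 \<le> w x"
    and iu: "integrable M (\<lambda>x. (u x)^2)" and iw: "integrable M (\<lambda>x. (w x)^2)"
  shows "integrable M (\<lambda>x. u x * w x)"
    and "(\<integral>x. u x * w x \<partial>M) \<le> sqrt (\<integral>x. (u x)^2 \<partial>M) * sqrt (\<integral>x. (w x)^2 \<partial>M)"
proof -
  have powr_u: "(\<lambda>x. u x powr 2) = (\<lambda>x. (u x)^2)" using u0 by (simp add: powr_two_nonneg)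
  have powr_w: "(\<lambda>x. w x powr 2) = (\<lambda>x. (w x)^2)" using w0 by (simp add: powr_two_nonneg)
  have "0 \<le> (\<integral>x. (u x)^2 \<partial>M)" "0 \<le> (\<integral>x. (w x)^2 \<partial>M)" by (intro integral_nonneg_AE; simp)+
  then show "integrable M (\<lambda>x. u x * w x)"
    and "(\<integral>x. u x * w x \<partial>M) \<le> sqrt (\<integral>x. (u x)^2 \<partial>M) * sqrt (\<integral>x. (w x)^2 \<partial>M)"
    using integral_Holder_inequality[of u M w 2 2] u0 w0 iu iw
    unfolding powr_u powr_w by (simp_all add: powr_half_sqrt)
qed

lemma integral_powr_le_of_bounded:
  fixes v :: "'a \<Rightarrow> real"
  assumes [measurable]: "v \<in> borel_measurable M"
    and v0: "\<And>x. 0 \<le> v x" and vS: "\<And>x. v x \<le> S" and iv: "integrable M v" and Q: "1 \<le> Q"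
  shows "integrable M (\<lambda>x. v x powr Q)" and "(\<integral>x. v x powr Q \<partial>M) \<le> S powr (Q - 1) * (\<integral>x. v x \<partial>M)"
proof -
  have pointwise: "v x powr Q \<le> S powr (Q - 1) * v x" for x
  proof (cases "v x = 0")
    case False
    then have "v x > 0" using v0[of x] by simp
    then have "v x powr Q = v x powr (Q - 1) * v x" by (simp add: powr_diff)
    also have "\<dots> \<le> S powr (Q - 1) * v x"
      using \<open>v x > 0\<close> vS[of x] Q by (intro mult_right_mono powr_mono2) auto
    finally show ?thesis .
  qed (use Q in simp)
  show integrable: "integrable M (\<lambda>x. v x powr Q)"
  proof (rule integrable_nonneg_le[OF _ _ _ pointwise])
    show "integrable M (\<lambda>x. S powr (Q - 1) * v x)" using iv by simp
  qed auto
  show "(\<integral>x. v x powr Q \<partial>M) \<le> S powr (Q - 1) * (\<integral>x. v x \<partial>M)"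
    using integral_mono[OF integrable _ pointwise] iv by simp
qed

lemma weighted_sq_integral_le_powr:
  fixes u v :: "'a \<Rightarrow> real"
  assumes [measurable]: "u \<in> borel_measurable M" "v \<in> borel_measurable M"
    and u0: "\<And>x. 0 \<le> u x" and v0: "\<And>x. 0 \<le> v x" and vS: "\<And>x. v x \<le> S"
    and iv: "integrable M v" and vI: "(\<integral>x. v x \<partial>M) \<le> I"
    and P: "2 \<le> P" and iu: "integrable M (\<lambda>x. u x powr P)" and S: "0 < S" and I: "0 < I"
  shows "integrable M (\<lambda>x. (u x)^2 * v x)"
    and "(\<integral>x. (u x)^2 * v x \<partial>M) \<le> (\<integral>x. u x powr P \<partial>M) powr (2 / P) * I powr (1 - 2 / P) * S powr (2 / P)"
proof -
  define A where "A = (\<integral>x. u x powr P \<partial>M)"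
  have A0: "0 \<le> A" unfolding A_def by (intro integral_nonneg_AE) auto
  have "integrable M (\<lambda>x. (u x)^2 * v x) \<and> (\<integral>x. (u x)^2 * v x \<partial>M) \<le> A powr (2 / P) * I powr (1 - 2 / P) * S powr (2 / P)"
  proof (cases "P = 2")
    case True
    have sq: "(u x)^2 = u x powr P" for x using True u0 by (simp add: powr_two_nonneg)
    have pointwise: "(u x)^2 * v x \<le> S * u x powr P" for x
      using mult_left_mono[OF vS, of "(u x)^2" x] by (simp add: sq mult.commute)
    have integrable: "integrable M (\<lambda>x. (u x)^2 * v x)"
    proof (rule Bochner_Integration.integrable_bound[where f="\<lambda>x. S * u x powr P"])
      show "AE x in M. norm ((u x)^2 * v x) \<le> norm (S * u x powr P)"
        using pointwise v0 S by (intro AE_I2) (simp add: abs_mult)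
    qed (use iu in auto)
    have "(\<integral>x. (u x)^2 * v x \<partial>M) \<le> (\<integral>x. S * u x powr P \<partial>M)"
      using integrable iu pointwise by (intro integral_mono) auto
    also have "\<dots> = S * A" unfolding A_def by simp
    finally show ?thesis using integrable True I S A0 by (simp add: mult.commute)
  next
    case False
    then have P2: "P > 2" using P by simp
    define P' where "P' = P / 2"
    define Q where "Q = P / (P - 2)"
    have P'1: "P' > 1" and Q1: "Q > 1" and conj: "1/P' + 1/Q = 1"
      unfolding P'_def Q_def using P2 by (simp_all add: field_simps)
    have u_powr: "((u x)^2) powr P' = u x powr P" for x
    proof -
      have "((u x)^2) powr P' = (u x powr 2) powr P'" using u0[of x] by (simp add: powr_two_nonneg)
      also have "\<dots> = u x powr P" unfolding powr_powr P'_def by simp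
      finally show ?thesis .
    qed
    note v_powr = integral_powr_le_of_bounded[OF assms(2) v0 vS iv less_imp_le[OF Q1]]
    define B where "B = (\<integral>x. v x powr Q \<partial>M)"
    have "B \<le> S powr (Q - 1) * (\<integral>x. v x \<partial>M)"
      unfolding B_def using v_powr(2) Q1 by simp
    also have "\<dots> \<le> S powr (Q - 1) * I" using vI by (simp add: mult_left_mono)
    finally have "B powr (1/Q) \<le> (S powr (Q - 1) * I) powr (1/Q)"
      unfolding B_def using Q1 by (intro powr_mono2 integral_nonneg_AE) auto
    also have "\<dots> = S powr (2 / P) * I powr (1 - 2 / P)"
    proof -
      have "(Q - 1) * (1 - 2 / P) = 2 / P" "1 / Q = 1 - 2 / P"
        unfolding Q_def using P2 by (simp_all add: field_simps)
      then show ?thesis using S I by (simp add: powr_mult powr_powr)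
    qed
    finally have B_bound: "B powr (1/Q) \<le> S powr (2 / P) * I powr (1 - 2 / P)" .
    have Holder: "integrable M (\<lambda>x. (u x)^2 * v x)"
      "(\<integral>x. (u x)^2 * v x \<partial>M) \<le> A powr (1/P') * B powr (1/Q)"
      using integral_Holder_inequality[of "\<lambda>x. (u x)^2" M v P' Q] P'1 Q1 conj v0 iu v_powr(1)
      unfolding A_def B_def u_powr by auto
    note Holder(2)
    also have "A powr (1/P') * B powr (1/Q) \<le> A powr (2 / P) * (S powr (2 / P) * I powr (1 - 2 / P))"
      using B_bound by (simp add: P'_def mult_left_mono)
    finally show ?thesis using Holder(1) by (simp add: mult_ac)
  qed
  then show "integrable M (\<lambda>x. (u x)^2 * v x)"
    and "(\<integral>x. (u x)^2 * v x \<partial>M) \<le> (\<integral>x. u x powr P \<partial>M) powr (2 / P) * I powr (1 - 2 / P) * S powr (2 / P)"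
    unfolding A_def by auto
qed

lemma memLp_borel_measurable: "memLp p f \<Longrightarrow> f \<in> borel_measurable borel"
  unfolding memLp_def by simp

lemma inv_exp_nonneg: "2 \<le> p \<Longrightarrow> 0 \<le> inv_exp p"
  by (cases p) (auto simp: inv_exp_def)

lemma inv_exp_le_half: "2 \<le> p \<Longrightarrow> inv_exp p \<le> 1/2"
  by (cases p) (auto simp: inv_exp_def field_simps)

lemma Lp_norm_two: "Lp_norm 2 f = sqrt (\<integral>x. (cmod (f x))^2 \<partial>lborel)"
proof -
  have "0 \<le> (\<integral>x. (cmod (f x))^2 \<partial>lborel)" by (intro integral_nonneg_AE) auto
  then show ?thesis by (simp add: Lp_norm_def powr_two_nonneg powr_half_sqrt)
qed

lemma memLp_two_iff:
  "memLp 2 f \<longleftrightarrow> f \<in> borel_measurable borel \<and> integrable lborel (\<lambda>x. (cmod (f x))^2)"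
  by (simp add: memLp_def powr_two_nonneg)

lemma Lp_norm_infinity:
  assumes "memLp \<infinity> f"
  shows "AE x in lborel. cmod (f x) \<le> Lp_norm \<infinity> f" and "0 \<le> Lp_norm \<infinity> f"
proof -
  have [measurable]: "f \<in> borel_measurable borel" using assms memLp_borel_measurable by blast
  define M where "M = esssup lborel (\<lambda>x. ereal (cmod (f x)))"
  have "M < \<infinity>" using assms unfolding memLp_def M_def by simp
  moreover have M0: "0 \<le> M"
  proof -
    have "esssup lborel (\<lambda>x::real. ereal 0) \<le> M"
      unfolding M_def by (rule esssup_mono) auto
    then show ?thesis by (simp add: esssup_const zero_ereal_def)
  qed
  ultimately have M_eq: "ereal (real_of_ereal M) = M" by (cases M) auto
  have norm: "Lp_norm \<infinity> f = real_of_ereal M" unfolding Lp_norm_def M_def by simp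
  have "AE x in lborel. ereal (cmod (f x)) \<le> M" unfolding M_def by (rule esssup_AE)
  then show "AE x in lborel. cmod (f x) \<le> Lp_norm \<infinity> f"
    unfolding norm by eventually_elim (metis M_eq ereal_less_eq(3))
  show "0 \<le> Lp_norm \<infinity> f" unfolding norm using M0 by (simp add: real_of_ereal_pos)
qed

lemma Lp_norm_nonneg: "memLp p f \<Longrightarrow> 0 \<le> Lp_norm p f"
  using Lp_norm_infinity(2)[of f] by (cases "p = \<infinity>") (simp_all add: Lp_norm_def)

text \<open>Hoelder with the exponents p/2 and p/(p-2) interpolates between p = 2, where v \<le> S is used,
  and p = \<infinity>, where the bound on the integral of v is used.\<close>
lemma weighted_sq_integral_le_Lp_norm:
  fixes f :: "real \<Rightarrow> complex" and v :: "real \<Rightarrow> real"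
  assumes p: "2 \<le> p" and f: "memLp p f" and [measurable]: "v \<in> borel_measurable borel"
    and v0: "\<And>x. 0 \<le> v x" and vS: "\<And>x. v x \<le> S" and iv: "integrable lborel v"
    and vI: "(\<integral>x. v x \<partial>lborel) \<le> I" and S: "S > 0" and I: "I > 0"
  shows "integrable lborel (\<lambda>x. (cmod (f x))^2 * v x)"
    and "(\<integral>x. (cmod (f x))^2 * v x \<partial>lborel)
           \<le> (Lp_norm p f)^2 * I powr (1 - 2 * inv_exp p) * S powr (2 * inv_exp p)"
proof -
  have [measurable]: "f \<in> borel_measurable borel" using f memLp_borel_measurable by blast
  have "integrable lborel (\<lambda>x. (cmod (f x))^2 * v x) \<and>
    (\<integral>x. (cmod (f x))^2 * v x \<partial>lborel) \<le> (Lp_norm p f)^2 * I powr (1 - 2 * inv_exp p) * S powr (2 * inv_exp p)"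
  proof (cases "p = \<infinity>")
    case True
    define N where "N = Lp_norm p f"
    have AE_bound: "AE x in lborel. (cmod (f x))^2 * v x \<le> N^2 * v x"
      using Lp_norm_infinity(1)[OF f[unfolded True]] unfolding N_def True
      by eventually_elim (use v0 in \<open>auto intro!: mult_right_mono power_mono\<close>)
    have integrable: "integrable lborel (\<lambda>x. (cmod (f x))^2 * v x)"
    proof (rule Bochner_Integration.integrable_bound[where f="\<lambda>x. N^2 * v x"])
      show "AE x in lborel. norm ((cmod (f x))^2 * v x) \<le> norm (N^2 * v x)"
        using AE_bound by eventually_elim (use v0 in auto)
    qed (use iv in auto)
    have "(\<integral>x. (cmod (f x))^2 * v x \<partial>lborel) \<le> (\<integral>x. N^2 * v x \<partial>lborel)"
      by (rule integral_mono_AE[OF integrable _ AE_bound]) (use iv in auto)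
    also have "\<dots> \<le> N^2 * I" using vI by (simp add: mult_left_mono)
    finally show ?thesis using integrable True I S unfolding N_def inv_exp_def by simp
  next
    case False
    then obtain P where P: "p = ereal P" using p by (cases p) auto
    have "2 \<le> P" using p P by simp
    have norm: "(Lp_norm p f)^2 = (\<integral>x. cmod (f x) powr P \<partial>lborel) powr (2 / P)"
      unfolding Lp_norm_def using P by (simp add: powr_powr[symmetric] power2_eq_square flip: powr_add)
    have "integrable lborel (\<lambda>x. cmod (f x) powr P)" using f P unfolding memLp_def by simp
    then show ?thesis
      using weighted_sq_integral_le_powr[of "\<lambda>x. cmod (f x)" lborel v S I P] v0 vS iv vI S I \<open>2 \<le> P\<close>
      unfolding norm by (simp add: P inv_exp_def)
  qed
  then show "integrable lborel (\<lambda>x. (cmod (f x))^2 * v x)"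
    and "(\<integral>x. (cmod (f x))^2 * v x \<partial>lborel)
           \<le> (Lp_norm p f)^2 * I powr (1 - 2 * inv_exp p) * S powr (2 * inv_exp p)"
    by auto
qed

definition decay_weight :: "real \<Rightarrow> real" where
  "decay_weight x = 1 / (1 + x^2)^2"

definition tail_weight :: "real \<Rightarrow> real \<Rightarrow> real" where
  "tail_weight R x = (if R < \<bar>x\<bar> then decay_weight x else 0)"

lemma borel_measurable_decay_weight [measurable]: "decay_weight \<in> borel_measurable borel"
  unfolding decay_weight_def[abs_def] by measurable

lemma borel_measurable_tail_weight [measurable]: "tail_weight R \<in> borel_measurable borel"
  unfolding tail_weight_def[abs_def] by measurable

lemma decay_weight_nonneg: "0 \<le> decay_weight x"
  unfolding decay_weight_def by simp

lemma decay_weight_le_one: "decay_weight x \<le> 1"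
  unfolding decay_weight_def by (simp add: divide_le_eq one_le_power)

lemma tail_weight_nonneg: "0 \<le> tail_weight R x"
  unfolding tail_weight_def by (simp add: decay_weight_nonneg)

lemma decay_weight_le_inverse_pow4: "x \<noteq> 0 \<Longrightarrow> decay_weight x \<le> 1 / x^4"
proof -
  assume "x \<noteq> 0"
  have "x^4 = (x^2)^2" by (simp flip: power_mult)
  also have "\<dots> \<le> (1 + x^2)^2" by (intro power_mono) auto
  finally show ?thesis unfolding decay_weight_def using \<open>x \<noteq> 0\<close> by (simp add: frac_le)
qed

lemma tail_weight_le: "R > 0 \<Longrightarrow> tail_weight R x \<le> 1 / R^4"
proof (cases "R < \<bar>x\<bar>")
  case True
  assume "R > 0"
  have "R^4 \<le> \<bar>x\<bar>^4" using True \<open>R > 0\<close> by (intro power_mono) auto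
  then have "1 / x^4 \<le> 1 / R^4" using \<open>R > 0\<close> by (simp add: frac_le power_even_abs_numeral)
  moreover have "decay_weight x \<le> 1 / x^4"
    using True \<open>R > 0\<close> by (intro decay_weight_le_inverse_pow4) auto
  ultimately show ?thesis using True unfolding tail_weight_def by simp
qed (simp add: tail_weight_def)

lemma integral_inverse_pow4_ge:
  assumes "R > 0"
  shows "integrable lborel (\<lambda>x::real. indicator {R..} x / x^4)"
    and "(\<integral>x. indicator {R..} x / x^4 \<partial>lborel) = 1 / (3 * R^3)"
proof -
  have has_integral: "((\<lambda>x::real. 1 / x ^ 4) has_integral 1 / (real (4 - 1) * R ^ (4 - 1))) {R..}"
    by (rule has_integral_inverse_power_to_inf) (use assms in auto)
  have nn: "(\<integral>\<^sup>+x. ennreal (1 / x^4) * indicator {R..} x \<partial>lborel) = ennreal (1 / (3 * R^3))"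
    using nn_integral_has_integral_lebesgue'[OF _ has_integral] by simp
  have eq: "(\<lambda>x. ennreal (1 / x^4) * indicator {R..} x) = (\<lambda>x. ennreal (indicator {R..} x / x^4))"
    by (auto simp: fun_eq_iff split: split_indicator)
  have "integrable lborel (\<lambda>x::real. indicator {R..} x / x^4)
      \<and> (\<integral>x. indicator {R..} x / x^4 \<partial>lborel) = 1 / (3 * R^3)"
    by (rule nn_integral_eq_integrable[THEN iffD1]) (use nn eq assms in \<open>auto split: split_indicator\<close>)
  then show "integrable lborel (\<lambda>x::real. indicator {R..} x / x^4)"
    and "(\<integral>x. indicator {R..} x / x^4 \<partial>lborel) = 1 / (3 * R^3)" by auto
qed

lemma integral_tail_weight:
  assumes R: "R > 0"
  shows "integrable lborel (tail_weight R)" and "(\<integral>x. tail_weight R x \<partial>lborel) \<le> 2 / (3 * R^3)"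
proof -
  define g where "g x = indicator {R..} x / x^4" for x :: real
  \<comment> \<open>the two tails x \<ge> R and x \<le> -R, the second one by the reflection x \<mapsto> -x\<close>
  define bound where "bound x = g x + g (0 + (-1) * x)" for x
  have g_integrable: "integrable lborel g" and g_integral: "(\<integral>x. g x \<partial>lborel) = 1 / (3 * R^3)"
    using integral_inverse_pow4_ge[OF R] unfolding g_def by auto
  have "integrable lborel (\<lambda>x. g (0 + (-1) * x))"
    by (rule lborel_integrable_real_affine[OF g_integrable]) simp
  moreover have "(\<integral>x. g (0 + (-1) * x) \<partial>lborel) = 1 / (3 * R^3)"
    using lborel_integral_real_affine[of "-1" g 0] g_integral by simp
  ultimately have bound_integrable: "integrable lborel bound"
    and bound_integral: "(\<integral>x. bound x \<partial>lborel) = 2 / (3 * R^3)"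
    unfolding bound_def using g_integrable g_integral by auto
  have pointwise: "tail_weight R x \<le> bound x" for x
    using R decay_weight_le_inverse_pow4[of x]
    unfolding tail_weight_def bound_def g_def by (auto split: split_indicator)
  show integrable: "integrable lborel (tail_weight R)"
    using bound_integrable _ tail_weight_nonneg pointwise by (rule integrable_nonneg_le) simp
  have "(\<integral>x. tail_weight R x \<partial>lborel) \<le> (\<integral>x. bound x \<partial>lborel)"
    using integrable bound_integrable pointwise by (rule integral_mono)
  then show "(\<integral>x. tail_weight R x \<partial>lborel) \<le> 2 / (3 * R^3)" unfolding bound_integral .
qed

lemma integral_decay_weight:
  shows "integrable lborel decay_weight" and "(\<integral>x. decay_weight x \<partial>lborel) \<le> 3"
proof -
  define bound where "bound x = indicator {-1..1} x + tail_weight 1 x" for x :: real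
  have bound_integrable: "integrable lborel bound"
    unfolding bound_def using integral_tail_weight(1)[of 1] by (auto simp: integrable_indicator_iff)
  have "(\<integral>x. bound x \<partial>lborel) \<le> 2 + 2 / 3"
    unfolding bound_def using integral_tail_weight[of 1] by (simp add: integrable_indicator_iff)
  moreover have pointwise: "decay_weight x \<le> bound x" for x
    using decay_weight_le_one[of x] unfolding bound_def tail_weight_def
    by (auto split: split_indicator)
  moreover show integrable: "integrable lborel decay_weight"
    using bound_integrable _ decay_weight_nonneg pointwise by (rule integrable_nonneg_le) simp
  ultimately show "(\<integral>x. decay_weight x \<partial>lborel) \<le> 3"
    using integral_mono[OF integrable bound_integrable pointwise] by simp
qed

section \<open>Hermite coefficients of L^p functions\<close>

lemma integral_hermite_sum_sq:
  fixes r :: "nat \<Rightarrow> real"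
  shows "integrable lborel (\<lambda>x. (\<Sum>n<M. r n * hermite_fun n x)^2)"
    and "(\<integral>x. (\<Sum>n<M. r n * hermite_fun n x)^2 \<partial>lborel) = (\<Sum>n<M. (r n)^2)"
proof -
  have expand: "(\<Sum>n<M. r n * hermite_fun n x)^2
      = (\<Sum>n<M. \<Sum>m<M. r n * r m * (hermite_fun n x * hermite_fun m x))" for x
    by (simp add: power2_eq_square sum_product algebra_simps)
  show "integrable lborel (\<lambda>x. (\<Sum>n<M. r n * hermite_fun n x)^2)"
    unfolding expand using integrable_hermite_fun_mult by auto
  have "(\<integral>x. (\<Sum>n<M. \<Sum>m<M. r n * r m * (hermite_fun n x * hermite_fun m x)) \<partial>lborel)
      = (\<Sum>n<M. \<Sum>m<M. r n * r m * (\<integral>x. hermite_fun n x * hermite_fun m x \<partial>lborel))"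
    using integrable_hermite_fun_mult by (simp add: integral_sum)
  also have "\<dots> = (\<Sum>n<M. (r n)^2)"
    by (simp add: integral_hermite_fun_mult power2_eq_square if_distrib sum.delta cong: if_cong)
  finally show "(\<integral>x. (\<Sum>n<M. r n * hermite_fun n x)^2 \<partial>lborel) = (\<Sum>n<M. (r n)^2)"
    unfolding expand .
qed

lemma integral_norm_hermite_sum_sq:
  fixes b :: "nat \<Rightarrow> complex"
  shows "integrable lborel (\<lambda>x. (cmod (\<Sum>n<M. b n * complex_of_real (hermite_fun n x)))^2)"
    and "(\<integral>x. (cmod (\<Sum>n<M. b n * complex_of_real (hermite_fun n x)))^2 \<partial>lborel) = (\<Sum>n<M. (cmod (b n))^2)"
proof -
  have split: "(cmod (\<Sum>n<M. b n * complex_of_real (hermite_fun n x)))^2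
      = (\<Sum>n<M. Re (b n) * hermite_fun n x)^2 + (\<Sum>n<M. Im (b n) * hermite_fun n x)^2" for x
    by (simp add: cmod_power2 Re_sum Im_sum)
  show "integrable lborel (\<lambda>x. (cmod (\<Sum>n<M. b n * complex_of_real (hermite_fun n x)))^2)"
    unfolding split using integral_hermite_sum_sq(1) by auto
  show "(\<integral>x. (cmod (\<Sum>n<M. b n * complex_of_real (hermite_fun n x)))^2 \<partial>lborel) = (\<Sum>n<M. (cmod (b n))^2)"
    unfolding split using integral_hermite_sum_sq[of "\<lambda>n. Re (b n)" M] integral_hermite_sum_sq[of "\<lambda>n. Im (b n)" M]
    by (simp add: cmod_power2 sum.distrib)
qed

lemma integrable_mult_hermite_fun:
  fixes u :: "real \<Rightarrow> real"
  assumes [measurable]: "u \<in> borel_measurable borel" and iu: "integrable lborel (\<lambda>x. (u x)^2)"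
  shows "integrable lborel (\<lambda>x. u x * hermite_fun n x)"
proof (rule Bochner_Integration.integrable_bound[where f="\<lambda>x. (u x)^2 + (hermite_fun n x)^2"])
  show "integrable lborel (\<lambda>x. (u x)^2 + (hermite_fun n x)^2)"
    using iu integrable_hermite_fun_sq by auto
  show "AE x in lborel. norm (u x * hermite_fun n x) \<le> norm ((u x)^2 + (hermite_fun n x)^2)"
  proof (intro AE_I2)
    fix x
    have "0 \<le> (\<bar>u x\<bar> - \<bar>hermite_fun n x\<bar>)^2" by simp
    also have "\<dots> = (u x)^2 + (hermite_fun n x)^2 - 2 * \<bar>u x * hermite_fun n x\<bar>"
      by (simp add: power2_eq_square algebra_simps abs_mult)
    finally have "\<bar>u x * hermite_fun n x\<bar> \<le> (u x)^2 + (hermite_fun n x)^2" by simp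
    then show "norm (u x * hermite_fun n x) \<le> norm ((u x)^2 + (hermite_fun n x)^2)" by simp
  qed
qed simp

lemma integrable_mult_hermite_fun_complex:
  fixes g :: "real \<Rightarrow> complex"
  assumes [measurable]: "g \<in> borel_measurable borel" and ig: "integrable lborel (\<lambda>x. (cmod (g x))^2)"
  shows "integrable lborel (\<lambda>x. g x * complex_of_real (hermite_fun n x))"
proof -
  have "integrable lborel (\<lambda>x. norm (cmod (g x) * hermite_fun n x))"
    using integrable_mult_hermite_fun[of "\<lambda>x. cmod (g x)"] ig by auto
  then show ?thesis
    by (rule Bochner_Integration.integrable_bound) (auto simp: norm_mult)
qed

lemma Bessel_inequality_hermite_real:
  fixes u :: "real \<Rightarrow> real"
  assumes [measurable]: "u \<in> borel_measurable borel" and iu: "integrable lborel (\<lambda>x. (u x)^2)"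
  shows "(\<Sum>n<M. (\<integral>x. u x * hermite_fun n x \<partial>lborel)^2) \<le> (\<integral>x. (u x)^2 \<partial>lborel)"
proof -
  define d where "d n = (\<integral>x. u x * hermite_fun n x \<partial>lborel)" for n
  define T where "T x = (\<Sum>n<M. d n * hermite_fun n x)" for x
  have uT: "u x * T x = (\<Sum>n<M. d n * (u x * hermite_fun n x))" for x
    unfolding T_def by (simp add: sum_distrib_left mult.left_commute)
  have uT_integrable: "integrable lborel (\<lambda>x. u x * T x)"
    unfolding uT using integrable_mult_hermite_fun[OF assms] by auto
  have uT_integral: "(\<integral>x. u x * T x \<partial>lborel) = (\<Sum>n<M. (d n)^2)"
    unfolding uT using integrable_mult_hermite_fun[OF assms]
    by (simp add: integral_sum d_def power2_eq_square)
  have "0 \<le> (\<integral>x. (u x - T x)^2 \<partial>lborel)" by (intro integral_nonneg_AE) auto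
  also have "\<dots> = (\<integral>x. (u x)^2 - 2 * (u x * T x) + (T x)^2 \<partial>lborel)"
    by (simp add: power2_eq_square algebra_simps)
  also have "\<dots> = (\<integral>x. (u x)^2 \<partial>lborel) - 2 * (\<Sum>n<M. (d n)^2) + (\<Sum>n<M. (d n)^2)"
    using iu uT_integrable uT_integral integral_hermite_sum_sq[of d M] unfolding T_def by simp
  finally show ?thesis unfolding d_def by simp
qed

lemma Bessel_inequality_hermite:
  fixes g :: "real \<Rightarrow> complex"
  assumes [measurable]: "g \<in> borel_measurable borel" and ig: "integrable lborel (\<lambda>x. (cmod (g x))^2)"
  shows "(\<Sum>n<M. (cmod (hermite_coeff g n))^2) \<le> (\<integral>x. (cmod (g x))^2 \<partial>lborel)"
proof -
  have iRe: "integrable lborel (\<lambda>x. (Re (g x))^2)"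
    by (rule Bochner_Integration.integrable_bound[OF ig])
      (auto intro!: AE_I2 simp: cmod_power2)
  have iIm: "integrable lborel (\<lambda>x. (Im (g x))^2)"
    by (rule Bochner_Integration.integrable_bound[OF ig])
      (auto intro!: AE_I2 simp: cmod_power2)
  have coeff: "(cmod (hermite_coeff g n))^2
     = (\<integral>x. Re (g x) * hermite_fun n x \<partial>lborel)^2 + (\<integral>x. Im (g x) * hermite_fun n x \<partial>lborel)^2" for n
    using integral_Re[OF integrable_mult_hermite_fun_complex[OF assms, of n]]
      integral_Im[OF integrable_mult_hermite_fun_complex[OF assms, of n]]
    unfolding hermite_coeff_def by (simp add: cmod_power2)
  have "(\<Sum>n<M. (cmod (hermite_coeff g n))^2)
     = (\<Sum>n<M. (\<integral>x. Re (g x) * hermite_fun n x \<partial>lborel)^2) + (\<Sum>n<M. (\<integral>x. Im (g x) * hermite_fun n x \<partial>lborel)^2)"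
    unfolding coeff by (simp add: sum.distrib)
  also have "\<dots> \<le> (\<integral>x. (Re (g x))^2 \<partial>lborel) + (\<integral>x. (Im (g x))^2 \<partial>lborel)"
    using iRe iIm by (intro add_mono Bessel_inequality_hermite_real) auto
  also have "\<dots> = (\<integral>x. (cmod (g x))^2 \<partial>lborel)"
    using iRe iIm by (simp add: cmod_power2)
  finally show ?thesis .
qed

text \<open>Cauchy-Schwarz after writing g h_n = (g / (1 + x^2)) ((1 + x^2) h_n).\<close>
lemma norm_hermite_coeff_le_weighted:
  fixes g :: "real \<Rightarrow> complex"
  assumes [measurable]: "g \<in> borel_measurable borel"
    and ig: "integrable lborel (\<lambda>x. (cmod (g x))^2 * decay_weight x)"
  shows "integrable lborel (\<lambda>x. g x * complex_of_real (hermite_fun n x))"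
    and "cmod (hermite_coeff g n)
           \<le> sqrt (\<integral>x. (cmod (g x))^2 * decay_weight x \<partial>lborel) * (sqrt 5 * (real n + 2))"
proof -
  define u where "u x = cmod (g x) / (1 + x^2)" for x
  define w where "w x = (1 + x^2) * \<bar>hermite_fun n x\<bar>" for x
  have pos: "0 < 1 + x^2" for x :: real by (simp add: add_pos_nonneg)
  have u_sq: "(u x)^2 = (cmod (g x))^2 * decay_weight x" for x
    unfolding u_def decay_weight_def by (simp add: power_divide)
  have w_sq: "(w x)^2 = ((1 + x^2) * hermite_fun n x)^2" for x
    unfolding w_def by (simp add: power_mult_distrib)
  have uw: "u x * w x = cmod (g x * complex_of_real (hermite_fun n x))" for x
    unfolding u_def w_def using pos[of x] by (simp add: norm_mult)
  have u0: "0 \<le> u x" and w0: "0 \<le> w x" for x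
    unfolding u_def w_def using pos[of x] by simp_all
  have [measurable]: "u \<in> borel_measurable borel" "w \<in> borel_measurable borel"
    unfolding u_def[abs_def] w_def[abs_def] by measurable
  note CS = integral_Cauchy_Schwarz[of u lborel w, OF _ _ u0 w0]
  have norm_integrable: "integrable lborel (\<lambda>x. cmod (g x * complex_of_real (hermite_fun n x)))"
    using CS(1) ig integrable_weighted_hermite_fun_sq unfolding u_sq w_sq uw by auto
  then show "integrable lborel (\<lambda>x. g x * complex_of_real (hermite_fun n x))"
    by (rule Bochner_Integration.integrable_bound) auto
  have "cmod (hermite_coeff g n) \<le> (\<integral>x. cmod (g x * complex_of_real (hermite_fun n x)) \<partial>lborel)"
    unfolding hermite_coeff_def by (rule integral_norm_bound)
  also have "\<dots> \<le> sqrt (\<integral>x. (u x)^2 \<partial>lborel) * sqrt (\<integral>x. (w x)^2 \<partial>lborel)"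
    using CS(2) ig integrable_weighted_hermite_fun_sq unfolding u_sq w_sq uw by auto
  also have "\<dots> \<le> sqrt (\<integral>x. (u x)^2 \<partial>lborel) * (sqrt 5 * (real n + 2))"
  proof (rule mult_left_mono)
    have "sqrt (\<integral>x. (w x)^2 \<partial>lborel) \<le> sqrt (5 * (real n + 2)^2)"
      unfolding w_sq using integral_weighted_hermite_fun_sq_le[of n] by simp
    then show "sqrt (\<integral>x. (w x)^2 \<partial>lborel) \<le> sqrt 5 * (real n + 2)"
      by (simp add: real_sqrt_mult)
  qed simp
  finally show "cmod (hermite_coeff g n)
           \<le> sqrt (\<integral>x. (cmod (g x))^2 * decay_weight x \<partial>lborel) * (sqrt 5 * (real n + 2))"
    unfolding u_sq .
qed

lemma norm_hermite_coeff_le: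
  assumes p: "2 \<le> p" and f: "memLp p f"
  shows "cmod (hermite_coeff f n) \<le> sqrt 15 * Lp_norm p f * (real n + 2)"
proof -
  have [measurable]: "f \<in> borel_measurable borel" using f memLp_borel_measurable by blast
  define N where "N = Lp_norm p f"
  have weighted: "integrable lborel (\<lambda>x. (cmod (f x))^2 * decay_weight x)"
    "(\<integral>x. (cmod (f x))^2 * decay_weight x \<partial>lborel) \<le> N^2 * 3 powr (1 - 2 * inv_exp p) * 1 powr (2 * inv_exp p)"
    unfolding N_def
    using weighted_sq_integral_le_Lp_norm[OF p f borel_measurable_decay_weight decay_weight_nonneg
        decay_weight_le_one integral_decay_weight] by simp_all
  have N0: "0 \<le> N" unfolding N_def using Lp_norm_nonneg[OF f] .
  have "(\<integral>x. (cmod (f x))^2 * decay_weight x \<partial>lborel) \<le> N^2 * 3 powr (1 - 2 * inv_exp p)"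
    using weighted(2) by simp
  also have "\<dots> \<le> N^2 * 3"
    using inv_exp_nonneg[OF p] powr_mono[of "1 - 2 * inv_exp p" 1 3] by (intro mult_left_mono) auto
  finally have "sqrt (\<integral>x. (cmod (f x))^2 * decay_weight x \<partial>lborel) \<le> sqrt (N^2 * 3)"
    by (rule real_sqrt_le_mono)
  also have "\<dots> = N * sqrt 3" using N0 by (simp add: real_sqrt_mult)
  finally have sqrt_bound: "sqrt (\<integral>x. (cmod (f x))^2 * decay_weight x \<partial>lborel) \<le> N * sqrt 3" .
  have "cmod (hermite_coeff f n)
      \<le> sqrt (\<integral>x. (cmod (f x))^2 * decay_weight x \<partial>lborel) * (sqrt 5 * (real n + 2))"
    by (rule norm_hermite_coeff_le_weighted(2)[OF _ weighted(1)]) simp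
  also have "\<dots> \<le> N * sqrt 3 * (sqrt 5 * (real n + 2))"
    using sqrt_bound by (rule mult_right_mono) simp
  also have "\<dots> = sqrt 15 * N * (real n + 2)"
    by (simp add: real_sqrt_mult[symmetric])
  finally show ?thesis unfolding N_def .
qed

lemma exp_neg_le_inverse_pow4: "(y::real) > 0 \<Longrightarrow> exp (-y) \<le> 256 / y^4"
proof -
  assume "y > 0"
  have "y / 4 \<le> exp (y / 4)" using exp_ge_add_one_self[of "y / 4"] by linarith
  then have "(y / 4)^4 \<le> exp (y / 4) ^ 4" using \<open>y > 0\<close> by (intro power_mono) auto
  also have "exp (y / 4) ^ 4 = exp y" by (simp flip: exp_of_nat_mult)
  finally have "y^4 \<le> 256 * exp y" by (simp add: power_divide)
  then show ?thesis using \<open>y > 0\<close> by (simp add: exp_minus field_simps)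
qed

lemma sum_inverse_squares_le: "(\<Sum>n<M. 1 / (real n + 1)^2) \<le> 2"
proof -
  have "(\<Sum>n<M. 1 / (real n + 1)^2) \<le> 2 - 2 / (real M + 1)"
  proof (induction M)
    case (Suc M)
    have "(real M + 1) * (real M + 2) \<le> 2 * (real M + 1)^2"
      by (simp add: power2_eq_square algebra_simps)
    then have "2 / (2 * (real M + 1)^2) \<le> 2 / ((real M + 1) * (real M + 2))"
      by (intro frac_le) auto
    then have "1 / (real M + 1)^2 \<le> 2 / ((real M + 1) * (real M + 2))" by simp
    also have "\<dots> = 2 / (real M + 1) - 2 / (real M + 2)"
      by (simp add: field_simps)
    finally show ?case using Suc by (simp add: add.commute)
  qed simp
  also have "\<dots> \<le> 2" by simp
  finally show ?thesis .
qed

lemma sum_exp_mult_sq_le: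
  assumes s: "s > 0"
  shows "(\<Sum>n<M. exp (-(2 * s * (2 * real n + 1))) * (real n + 2)^2) \<le> 128 / s^4"
proof -
  have summand: "exp (-(2 * s * (2 * real n + 1))) * (real n + 2)^2 \<le> 64 / s^4 * (1 / (real n + 1)^2)" for n
  proof -
    have "exp (-(2 * s * (2 * real n + 1))) \<le> 256 / (2 * s * (2 * real n + 1))^4"
      using s by (intro exp_neg_le_inverse_pow4) simp
    also have "\<dots> \<le> 256 / (2 * s * (real n + 1))^4"
      using s by (intro divide_left_mono power_mono mult_left_mono mult_pos_pos zero_less_power) auto
    also have "\<dots> = 16 / (s^4 * (real n + 1)^4)"
      by (simp add: power_mult_distrib)
    finally have "exp (-(2 * s * (2 * real n + 1))) * (real n + 2)^2
        \<le> 16 / (s^4 * (real n + 1)^4) * (4 * (real n + 1)^2)"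
      by (rule mult_mono) (simp_all add: power2_eq_square algebra_simps)
    also have "\<dots> = 64 / s^4 * (1 / (real n + 1)^2)"
    proof -
      have "a > 0 \<Longrightarrow> 16 / (s^4 * a^4) * (4 * a^2) = 64 / s^4 * (1 / a^2)" for a
        using s by (simp add: field_simps power2_eq_square power4_eq_xxxx)
      then show ?thesis by simp
    qed
    finally show ?thesis .
  qed
  have "(\<Sum>n<M. exp (-(2 * s * (2 * real n + 1))) * (real n + 2)^2)
      \<le> 64 / s^4 * (\<Sum>n<M. 1 / (real n + 1)^2)"
    unfolding sum_distrib_left by (intro sum_mono summand)
  also have "\<dots> \<le> 64 / s^4 * 2"
    using s by (intro mult_left_mono sum_inverse_squares_le) auto
  finally show ?thesis by simp
qed

lemma hermite_coeff_add:
  assumes "integrable lborel (\<lambda>x. g x * complex_of_real (hermite_fun n x))"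
    and "integrable lborel (\<lambda>x. k x * complex_of_real (hermite_fun n x))"
  shows "hermite_coeff (\<lambda>x. g x + k x) n = hermite_coeff g n + hermite_coeff k n"
  unfolding hermite_coeff_def using assms by (simp add: distrib_right)

lemma sum_hermite_coeff_inner_le:
  assumes p: "2 \<le> p" and f: "memLp p f" and R: "R > 0"
  shows "integrable lborel (\<lambda>x. f x * indicator {-R..R} x * complex_of_real (hermite_fun n x))"
    and "(\<Sum>n<M. (cmod (hermite_coeff (\<lambda>x. f x * indicator {-R..R} x) n))^2)
           \<le> 2 * (Lp_norm p f)^2 * R powr (1 - 2 * inv_exp p)"
proof -
  have [measurable]: "f \<in> borel_measurable borel" using f memLp_borel_measurable by blast
  define q where "q = inv_exp p"
  have sq: "(cmod (f x * indicator {-R..R} x))^2 = (cmod (f x))^2 * indicator {-R..R} x" for x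
    by (simp split: split_indicator)
  have weighted: "integrable lborel (\<lambda>x. (cmod (f x))^2 * indicator {-R..R} x)"
    "(\<integral>x. (cmod (f x))^2 * indicator {-R..R} x \<partial>lborel)
       \<le> (Lp_norm p f)^2 * (2 * R) powr (1 - 2 * q) * 1 powr (2 * q)"
    unfolding q_def
    using weighted_sq_integral_le_Lp_norm[OF p f, where v = "indicator {-R..R}" and S = 1 and I = "2 * R"] R
    by (simp_all add: integrable_indicator_iff split: split_indicator)
  show "integrable lborel (\<lambda>x. f x * indicator {-R..R} x * complex_of_real (hermite_fun n x))"
    using weighted(1) by (intro integrable_mult_hermite_fun_complex) (simp_all add: sq)
  have "(\<Sum>n<M. (cmod (hermite_coeff (\<lambda>x. f x * indicator {-R..R} x) n))^2)
      \<le> (\<integral>x. (cmod (f x))^2 * indicator {-R..R} x \<partial>lborel)"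
    using Bessel_inequality_hermite[of "\<lambda>x. f x * indicator {-R..R} x" M] weighted(1) by (simp add: sq)
  also have "\<dots> \<le> (Lp_norm p f)^2 * (2 powr (1 - 2 * q) * R powr (1 - 2 * q))"
    using weighted(2) R by (simp add: powr_mult)
  also have "\<dots> \<le> (Lp_norm p f)^2 * (2 * R powr (1 - 2 * q))"
    using inv_exp_nonneg[OF p] powr_mono[of "1 - 2 * q" 1 2] unfolding q_def
    by (intro mult_left_mono mult_right_mono) auto
  finally show "(\<Sum>n<M. (cmod (hermite_coeff (\<lambda>x. f x * indicator {-R..R} x) n))^2)
           \<le> 2 * (Lp_norm p f)^2 * R powr (1 - 2 * inv_exp p)"
    unfolding q_def by (simp add: mult_ac)
qed

lemma norm_hermite_coeff_outer_le:
  assumes p: "2 \<le> p" and f: "memLp p f" and R: "R > 0"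
  shows "integrable lborel (\<lambda>x. f x * (1 - indicator {-R..R} x) * complex_of_real (hermite_fun n x))"
    and "(cmod (hermite_coeff (\<lambda>x. f x * (1 - indicator {-R..R} x)) n))^2
           \<le> 5 * (Lp_norm p f)^2 * R powr (- 3 - 2 * inv_exp p) * (real n + 2)^2"
proof -
  have [measurable]: "f \<in> borel_measurable borel" using f memLp_borel_measurable by blast
  define q where "q = inv_exp p"
  define g where "g x = f x * (1 - indicator {-R..R} x)" for x
  have [measurable]: "g \<in> borel_measurable borel" unfolding g_def[abs_def] by measurable
  have sq: "(cmod (g x))^2 * decay_weight x = (cmod (f x))^2 * tail_weight R x" for x
    unfolding g_def tail_weight_def by (auto split: split_indicator)
  have weighted: "integrable lborel (\<lambda>x. (cmod (f x))^2 * tail_weight R x)"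
    "(\<integral>x. (cmod (f x))^2 * tail_weight R x \<partial>lborel)
       \<le> (Lp_norm p f)^2 * (2 / (3 * R^3)) powr (1 - 2 * q) * (1 / R^4) powr (2 * q)"
    unfolding q_def
    using weighted_sq_integral_le_Lp_norm[OF p f borel_measurable_tail_weight tail_weight_nonneg
        tail_weight_le[OF R] integral_tail_weight[OF R]] R
    by simp_all
  note coeff_bound = norm_hermite_coeff_le_weighted[of g n, unfolded sq, OF _ weighted(1)]
  show "integrable lborel (\<lambda>x. f x * (1 - indicator {-R..R} x) * complex_of_real (hermite_fun n x))"
    using coeff_bound(1) unfolding g_def by simp
  have "(2 / (3 * R^3)) powr (1 - 2 * q) \<le> (R powr (-3)) powr (1 - 2 * q)"
    using R inv_exp_le_half[OF p] unfolding q_def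
    by (intro powr_mono2) (auto simp: powr_minus_divide powr_realpow divide_simps)
  also have "\<dots> = R powr (-3 + 6 * q)" by (simp add: powr_powr algebra_simps)
  finally have t1: "(2 / (3 * R^3)) powr (1 - 2 * q) \<le> R powr (-3 + 6 * q)" .
  have "1 / R^4 = R powr (-4)" using R by (simp add: powr_minus_divide powr_realpow)
  then have t2: "(1 / R^4) powr (2 * q) = R powr (- 8 * q)" by (simp add: powr_powr)
  have "(Lp_norm p f)^2 * (2 / (3 * R^3)) powr (1 - 2 * q) * (1 / R^4) powr (2 * q)
      \<le> (Lp_norm p f)^2 * R powr (-3 + 6 * q) * R powr (- 8 * q)"
    unfolding t2 using t1 by (intro mult_right_mono mult_left_mono) simp_all
  also have "\<dots> = (Lp_norm p f)^2 * R powr (-3 + 6 * q + - 8 * q)"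
    by (simp only: mult.assoc powr_add)
  also have "-3 + 6 * q + - 8 * q = - 3 - 2 * q" by simp
  finally have "(Lp_norm p f)^2 * (2 / (3 * R^3)) powr (1 - 2 * q) * (1 / R^4) powr (2 * q)
      \<le> (Lp_norm p f)^2 * R powr (- 3 - 2 * q)" .
  with weighted(2) have B: "(\<integral>x. (cmod (f x))^2 * tail_weight R x \<partial>lborel) \<le> (Lp_norm p f)^2 * R powr (- 3 - 2 * q)"
    by linarith
  have "(cmod (hermite_coeff g n))^2
      \<le> (sqrt (\<integral>x. (cmod (f x))^2 * tail_weight R x \<partial>lborel) * (sqrt 5 * (real n + 2)))^2"
    using coeff_bound(2) by (intro power_mono) simp_all
  also have "\<dots> = 5 * (\<integral>x. (cmod (f x))^2 * tail_weight R x \<partial>lborel) * (real n + 2)^2"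
    by (simp add: power_mult_distrib integral_nonneg_AE tail_weight_nonneg)
  also have "\<dots> \<le> 5 * ((Lp_norm p f)^2 * R powr (- 3 - 2 * q)) * (real n + 2)^2"
    using B by (intro mult_right_mono mult_left_mono) simp_all
  finally show "(cmod (hermite_coeff (\<lambda>x. f x * (1 - indicator {-R..R} x)) n))^2
           \<le> 5 * (Lp_norm p f)^2 * R powr (- 3 - 2 * inv_exp p) * (real n + 2)^2"
    unfolding g_def q_def by (simp add: mult_ac)
qed

lemma sum_damped_hermite_coeff_outer_le:
  assumes p: "2 \<le> p" and f: "memLp p f" and s: "0 < s"
  shows "(\<Sum>n<M. exp (-(2 * s * (2 * real n + 1)))
            * (cmod (hermite_coeff (\<lambda>x. f x * (1 - indicator {-(1 / s)..1 / s} x)) n))^2)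
           \<le> 640 * (Lp_norm p f)^2 * s powr (-1 + 2 * inv_exp p)"
proof -
  define q where "q = inv_exp p"
  define N where "N = Lp_norm p f"
  define outer where "outer x = f x * (1 - indicator {-(1 / s)..1 / s} x)" for x
  define damp where "damp n = exp (-(2 * s * (2 * real n + 1)))" for n
  have R_powr: "(1 / s) powr a = s powr (- a)" for a
    using s by (simp add: powr_divide powr_minus_divide)
  have "(\<Sum>n<M. damp n * (cmod (hermite_coeff outer n))^2)
      \<le> (\<Sum>n<M. 5 * N^2 * s powr (3 + 2 * q) * (damp n * (real n + 2)^2))"
  proof (rule sum_mono)
    fix n
    have "(cmod (hermite_coeff outer n))^2 \<le> 5 * N^2 * s powr (3 + 2 * q) * (real n + 2)^2"
      using norm_hermite_coeff_outer_le(2)[OF p f, of "1 / s" n] s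
      unfolding outer_def N_def q_def R_powr by (simp add: add.commute)
    then show "damp n * (cmod (hermite_coeff outer n))^2 \<le> 5 * N^2 * s powr (3 + 2 * q) * (damp n * (real n + 2)^2)"
      using mult_left_mono[OF _ exp_ge_zero] unfolding damp_def by (simp add: mult_ac)
  qed
  also have "\<dots> \<le> 5 * N^2 * s powr (3 + 2 * q) * (128 / s^4)"
    unfolding sum_distrib_left[symmetric] damp_def by (intro mult_left_mono sum_exp_mult_sq_le s) simp
  also have "\<dots> = 640 * N^2 * s powr (-1 + 2 * q)"
  proof -
    have "s^4 = s powr 4" using powr_realpow[of s 4] s by simp
    then have "s powr (3 + 2 * q) / s^4 = s powr (3 + 2 * q - 4)" by (simp only: powr_diff)
    then have "s powr (3 + 2 * q) / s^4 = s powr (-1 + 2 * q)" by simp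
    moreover have "5 * N^2 * s powr (3 + 2 * q) * (128 / s^4) = 640 * N^2 * (s powr (3 + 2 * q) / s^4)"
      by simp
    ultimately show ?thesis by simp
  qed
  finally show ?thesis unfolding damp_def outer_def N_def q_def .
qed

lemma damped_hermite_coeff_sum_le:
  assumes p: "2 \<le> p" and f: "memLp p f" and s: "0 < s"
  shows "(\<Sum>n<M. exp (-(2 * s * (2 * real n + 1))) * (cmod (hermite_coeff f n))^2)
           \<le> 1300 * (Lp_norm p f)^2 * s powr (-1 + 2 * inv_exp p)"
proof -
  define q where "q = inv_exp p"
  define N where "N = Lp_norm p f"
  define R where "R = 1 / s"
  have R: "R > 0" unfolding R_def using s by simp
  have R_powr: "R powr a = s powr (- a)" for a
    unfolding R_def using s by (simp add: powr_divide powr_minus_divide)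
  define inner where "inner x = f x * indicator {-R..R} x" for x
  define outer where "outer x = f x * (1 - indicator {-R..R} x)" for x
  define damp where "damp n = exp (-(2 * s * (2 * real n + 1)))" for n
  have damp: "0 \<le> damp n" "damp n \<le> 1" for n unfolding damp_def using s by auto
  have split: "hermite_coeff f n = hermite_coeff inner n + hermite_coeff outer n" for n
  proof -
    have "f = (\<lambda>x. inner x + outer x)" unfolding inner_def outer_def by (simp add: algebra_simps)
    then show ?thesis
      using hermite_coeff_add[of inner n outer] sum_hermite_coeff_inner_le(1)[OF p f R]
        norm_hermite_coeff_outer_le(1)[OF p f R] unfolding inner_def outer_def by metis
  qed
  have summand: "damp n * (cmod (hermite_coeff f n))^2
      \<le> 2 * (cmod (hermite_coeff inner n))^2 + 2 * (damp n * (cmod (hermite_coeff outer n))^2)" for n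
  proof -
    have "(cmod (hermite_coeff f n))^2 \<le> 2 * (cmod (hermite_coeff inner n))^2 + 2 * (cmod (hermite_coeff outer n))^2"
      unfolding split by (rule norm_add_sq_le)
    then have "damp n * (cmod (hermite_coeff f n))^2
        \<le> damp n * (2 * (cmod (hermite_coeff inner n))^2 + 2 * (cmod (hermite_coeff outer n))^2)"
      using damp(1) by (rule mult_left_mono)
    also have "\<dots> = damp n * (2 * (cmod (hermite_coeff inner n))^2) + 2 * (damp n * (cmod (hermite_coeff outer n))^2)"
      by (simp add: algebra_simps)
    also have "\<dots> \<le> 2 * (cmod (hermite_coeff inner n))^2 + 2 * (damp n * (cmod (hermite_coeff outer n))^2)"
      using damp by (simp add: mult_left_le_one_le)
    finally show ?thesis .
  qed
  have inner_sum: "(\<Sum>n<M. (cmod (hermite_coeff inner n))^2) \<le> 2 * N^2 * s powr (-1 + 2 * q)"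
    using sum_hermite_coeff_inner_le(2)[OF p f R, of M]
    unfolding inner_def N_def q_def R_powr by simp
  have outer_sum: "(\<Sum>n<M. damp n * (cmod (hermite_coeff outer n))^2) \<le> 640 * N^2 * s powr (-1 + 2 * q)"
    using sum_damped_hermite_coeff_outer_le[OF p f s] unfolding damp_def outer_def R_def N_def q_def .
  have "(\<Sum>n<M. damp n * (cmod (hermite_coeff f n))^2)
      \<le> 2 * (\<Sum>n<M. (cmod (hermite_coeff inner n))^2) + 2 * (\<Sum>n<M. damp n * (cmod (hermite_coeff outer n))^2)"
    using sum_mono[of "{..<M}", OF summand] by (simp add: sum.distrib sum_distrib_left)
  also have "\<dots> \<le> 1300 * (N^2 * s powr (-1 + 2 * q))"
    using inner_sum outer_sum mult_nonneg_nonneg[OF zero_le_power2[of N] powr_ge_zero[of s "-1 + 2 * q"]]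
    unfolding mult.assoc by linarith
  finally show ?thesis unfolding damp_def N_def q_def by (simp add: mult.assoc)
qed

section \<open>The semigroup\<close>

lemma summable_le_exp_mult_linear:
  fixes b :: "nat \<Rightarrow> real"
  assumes s: "0 < s" and b0: "\<And>n. 0 \<le> b n" and K: "0 \<le> K"
    and b: "\<And>n. b n \<le> exp (-(s * (2 * real n + 1))) * (K * (real n + 2))"
  shows "summable b"
proof (rule summableI_nonneg_bounded[OF b0])
  fix M
  have "b n \<le> K * (exp (-(2 * (s/2) * (2 * real n + 1))) * (real n + 2)^2)" for n
  proof -
    have "b n \<le> K * (exp (-(2 * (s/2) * (2 * real n + 1))) * (real n + 2))"
      using b[of n] by (simp add: mult_ac)
    also have "\<dots> \<le> K * (exp (-(2 * (s/2) * (2 * real n + 1))) * (real n + 2)^2)"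
      using K by (intro mult_left_mono) (auto simp: power2_eq_square)
    finally show ?thesis .
  qed
  then have "(\<Sum>n<M. b n) \<le> K * (\<Sum>n<M. exp (-(2 * (s/2) * (2 * real n + 1))) * (real n + 2)^2)"
    unfolding sum_distrib_left by (rule sum_mono)
  also have "\<dots> \<le> K * (128 / (s/2)^4)"
    using K s by (intro mult_left_mono sum_exp_mult_sq_le) auto
  finally show "(\<Sum>n<M. b n) \<le> K * (128 / (s/2)^4)" .
qed

lemma summable_weighted_hermite_fun_sq:
  fixes b :: "nat \<Rightarrow> real"
  assumes b0: "\<And>n. 0 \<le> b n" and sb: "summable b"
  shows "AE x in lborel. summable (\<lambda>n. b n * (hermite_fun n x)^2)"
    and "integrable lborel (\<lambda>x. \<Sum>n. b n * (hermite_fun n x)^2)"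
proof -
  have integrable: "integrable lborel (\<lambda>x. b n * (hermite_fun n x)^2)" for n
    using integrable_hermite_fun_sq by auto
  have term_integral: "(\<integral>\<^sup>+x. ennreal (b n * (hermite_fun n x)^2) \<partial>lborel) = ennreal (b n)" for n
  proof -
    have "(\<integral>\<^sup>+x. ennreal (b n * (hermite_fun n x)^2) \<partial>lborel) = ennreal (\<integral>x. b n * (hermite_fun n x)^2 \<partial>lborel)"
      by (rule nn_integral_eq_integral[OF integrable]) (use b0 in auto)
    then show ?thesis using integral_hermite_fun_sq[of n] by simp
  qed
  have "(\<integral>\<^sup>+x. (\<Sum>n. ennreal (b n * (hermite_fun n x)^2)) \<partial>lborel) = (\<Sum>n. ennreal (b n))"
    by (subst nn_integral_suminf) (auto simp: term_integral)
  also have "\<dots> = ennreal (suminf b)" by (rule suminf_ennreal2[OF b0 sb])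
  finally have "(\<integral>\<^sup>+x. (\<Sum>n. ennreal (b n * (hermite_fun n x)^2)) \<partial>lborel) \<noteq> \<infinity>" by simp
  then have "AE x in lborel. (\<Sum>n. ennreal (b n * (hermite_fun n x)^2)) \<noteq> \<infinity>"
    by (rule nn_integral_noteq_infinite[rotated]) measurable
  then show AE_summable: "AE x in lborel. summable (\<lambda>n. b n * (hermite_fun n x)^2)"
    by eventually_elim (rule summable_suminf_not_top, use b0 in auto)
  show "integrable lborel (\<lambda>x. \<Sum>n. b n * (hermite_fun n x)^2)"
  proof (rule integrable_suminf[OF integrable])
    show "AE x in lborel. summable (\<lambda>n. norm (b n * (hermite_fun n x)^2))"
      using AE_summable by eventually_elim (use b0 in simp)
    have "(\<integral>x. norm (b n * (hermite_fun n x)^2) \<partial>lborel) = b n" for n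
      using b0[of n] integral_hermite_fun_sq[of n] by simp
    then show "summable (\<lambda>n. \<integral>x. norm (b n * (hermite_fun n x)^2) \<partial>lborel)"
      using sb by simp
  qed
qed

text \<open>Cauchy-Schwarz with the weights |a_n|.\<close>
lemma hermite_series_pointwise:
  fixes a :: "nat \<Rightarrow> complex"
  assumes sa: "summable (\<lambda>n. cmod (a n))" and se: "summable (\<lambda>n. cmod (a n) * (hermite_fun n x)^2)"
  shows "summable (\<lambda>n. a n * complex_of_real (hermite_fun n x))"
    and "(cmod (\<Sum>n<N. a n * complex_of_real (hermite_fun n x)))^2
           \<le> (\<Sum>n. cmod (a n)) * (\<Sum>n. cmod (a n) * (hermite_fun n x)^2)"
proof -
  have "norm (a n * complex_of_real (hermite_fun n x)) \<le> cmod (a n) + cmod (a n) * (hermite_fun n x)^2" for n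
  proof -
    have "\<bar>y\<bar> \<le> 1 + y^2" for y :: real
    proof -
      have "(\<bar>y\<bar> - 1)^2 = y^2 - 2 * \<bar>y\<bar> + 1" by (simp add: power2_eq_square algebra_simps)
      then show ?thesis using zero_le_power2[of "\<bar>y\<bar> - 1"] zero_le_power2[of y] by linarith
    qed
    then have "cmod (a n) * \<bar>hermite_fun n x\<bar> \<le> cmod (a n) * (1 + (hermite_fun n x)^2)"
      by (intro mult_left_mono) simp_all
    then show ?thesis by (simp add: norm_mult algebra_simps)
  qed
  then have "summable (\<lambda>n. norm (a n * complex_of_real (hermite_fun n x)))"
    by (intro summable_comparison_test[OF _ summable_add[OF sa se]]) auto
  then show "summable (\<lambda>n. a n * complex_of_real (hermite_fun n x))"
    by (rule summable_norm_cancel)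
  have "cmod (\<Sum>n<N. a n * complex_of_real (hermite_fun n x)) \<le> (\<Sum>n<N. cmod (a n) * \<bar>hermite_fun n x\<bar>)"
    by (rule order_trans[OF norm_sum]) (simp add: norm_mult)
  then have "(cmod (\<Sum>n<N. a n * complex_of_real (hermite_fun n x)))^2
      \<le> (\<Sum>n<N. sqrt (cmod (a n)) * (sqrt (cmod (a n)) * \<bar>hermite_fun n x\<bar>))^2"
    by (intro power_mono) (simp_all add: mult.assoc[symmetric])
  also have "\<dots> \<le> (\<Sum>n<N. (sqrt (cmod (a n)))^2) * (\<Sum>n<N. (sqrt (cmod (a n)) * \<bar>hermite_fun n x\<bar>)^2)"
    by (rule Cauchy_Schwarz_ineq_sum)
  also have "\<dots> = (\<Sum>n<N. cmod (a n)) * (\<Sum>n<N. cmod (a n) * (hermite_fun n x)^2)"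
    by (simp add: power_mult_distrib)
  also have "\<dots> \<le> (\<Sum>n. cmod (a n)) * (\<Sum>n. cmod (a n) * (hermite_fun n x)^2)"
  proof (rule mult_mono)
    show "(\<Sum>n<N. cmod (a n)) \<le> (\<Sum>n. cmod (a n))" by (rule sum_le_suminf[OF sa]) auto
    show "(\<Sum>n<N. cmod (a n) * (hermite_fun n x)^2) \<le> (\<Sum>n. cmod (a n) * (hermite_fun n x)^2)"
      by (rule sum_le_suminf[OF se]) auto
    show "0 \<le> (\<Sum>n. cmod (a n))" by (rule suminf_nonneg[OF sa]) auto
  qed (simp add: sum_nonneg)
  finally show "(cmod (\<Sum>n<N. a n * complex_of_real (hermite_fun n x)))^2
           \<le> (\<Sum>n. cmod (a n)) * (\<Sum>n. cmod (a n) * (hermite_fun n x)^2)" .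
qed

lemma hermite_series_dominated:
  fixes a :: "nat \<Rightarrow> complex"
  assumes sa: "summable (\<lambda>n. cmod (a n))"
  obtains E where "integrable lborel E"
    and "AE x in lborel. summable (\<lambda>n. a n * complex_of_real (hermite_fun n x)) \<and>
           (\<forall>N. (cmod (\<Sum>n<N. a n * complex_of_real (hermite_fun n x)))^2 \<le> E x)"
proof
  show "integrable lborel (\<lambda>x. (\<Sum>n. cmod (a n)) * (\<Sum>n. cmod (a n) * (hermite_fun n x)^2))"
    using summable_weighted_hermite_fun_sq(2)[of "\<lambda>n. cmod (a n)"] sa by auto
  show "AE x in lborel. summable (\<lambda>n. a n * complex_of_real (hermite_fun n x)) \<and>
      (\<forall>N. (cmod (\<Sum>n<N. a n * complex_of_real (hermite_fun n x)))^2
        \<le> (\<Sum>n. cmod (a n)) * (\<Sum>n. cmod (a n) * (hermite_fun n x)^2))"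
  proof -
    have "AE x in lborel. summable (\<lambda>n. cmod (a n) * (hermite_fun n x)^2)"
      using summable_weighted_hermite_fun_sq(1)[of "\<lambda>n. cmod (a n)"] sa by simp
    then show ?thesis by eventually_elim (use hermite_series_pointwise[OF sa] in blast)
  qed
qed

lemma hermite_series_L2_limit:
  fixes a :: "nat \<Rightarrow> complex"
  assumes sa: "summable (\<lambda>n. cmod (a n))" and bound: "\<And>M. (\<Sum>n<M. (cmod (a n))^2) \<le> B"
  shows "\<exists>g. memLp 2 g \<and>
           (\<lambda>N. Lp_norm 2 (\<lambda>x. g x - (\<Sum>n<N. a n * complex_of_real (hermite_fun n x)))) \<longlonglongrightarrow> 0 \<and>
           Lp_norm 2 g \<le> sqrt B"
proof -
  define S where "S N x = (\<Sum>n<N. a n * complex_of_real (hermite_fun n x))" for N x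
  define g where "g x = lim (\<lambda>N. S N x)" for x
  have [measurable]: "S N \<in> borel_measurable borel" for N unfolding S_def[abs_def] by measurable
  have [measurable]: "g \<in> borel_measurable borel" unfolding g_def[abs_def] by measurable
  obtain E where E_integrable: "integrable lborel E"
    and AE_good: "AE x in lborel. summable (\<lambda>n. a n * complex_of_real (hermite_fun n x)) \<and>
      (\<forall>N. (cmod (S N x))^2 \<le> E x)"
    using hermite_series_dominated[OF sa] unfolding S_def by blast
  have dominating: "integrable lborel (\<lambda>x. 4 * E x)" using E_integrable by simp
  have S_conv: "(\<lambda>N. S N x) \<longlonglongrightarrow> g x" and S_bound: "(cmod (S N x))^2 \<le> E x"
    and g_bound: "(cmod (g x))^2 \<le> E x" and E_nonneg: "0 \<le> E x"
    if "summable (\<lambda>n. a n * complex_of_real (hermite_fun n x)) \<and> (\<forall>N. (cmod (S N x))^2 \<le> E x)" for N x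
  proof -
    show S_conv: "(\<lambda>N. S N x) \<longlonglongrightarrow> g x"
      using summable_LIMSEQ[of "\<lambda>n. a n * complex_of_real (hermite_fun n x)"] that
      unfolding g_def S_def by (simp add: limI)
    show "(cmod (S N x))^2 \<le> E x" "0 \<le> E x"
      using that spec[of _ 0] by (auto simp: S_def intro: order_trans[OF zero_le_power2])
    show "(cmod (g x))^2 \<le> E x"
      using S_conv that by (intro LIMSEQ_le_const2[of "\<lambda>N. (cmod (S N x))^2"] tendsto_intros) auto
  qed
  have S_norm_conv: "(\<lambda>N. \<integral>x. (cmod (S N x))^2 \<partial>lborel) \<longlonglongrightarrow> (\<integral>x. (cmod (g x))^2 \<partial>lborel)"
    and g_integrable: "integrable lborel (\<lambda>x. (cmod (g x))^2)"
  proof -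
    have lim: "AE x in lborel. (\<lambda>N. (cmod (S N x))^2) \<longlonglongrightarrow> (cmod (g x))^2"
      using AE_good by eventually_elim (intro tendsto_intros S_conv)
    have bd: "AE x in lborel. norm ((cmod (S N x))^2) \<le> 4 * E x" for N
      using AE_good
    proof eventually_elim
      case (elim x)
      have "(cmod (S N x))^2 \<le> 4 * E x" using S_bound[OF elim, of N] E_nonneg[OF elim] by linarith
      then show ?case by simp
    qed
    have meas: "(\<lambda>x. (cmod (g x))^2) \<in> borel_measurable lborel"
      "(\<lambda>x. (cmod (S N x))^2) \<in> borel_measurable lborel" for N
      by measurable
    show "(\<lambda>N. \<integral>x. (cmod (S N x))^2 \<partial>lborel) \<longlonglongrightarrow> (\<integral>x. (cmod (g x))^2 \<partial>lborel)"
      and "integrable lborel (\<lambda>x. (cmod (g x))^2)"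
      using integral_dominated_convergence[OF meas dominating lim bd]
        integrable_dominated_convergence[OF meas dominating lim bd] by simp_all
  qed
  have "(\<integral>x. (cmod (S N x))^2 \<partial>lborel) \<le> B" for N
    using integral_norm_hermite_sum_sq(2)[of a N] bound[of N] unfolding S_def by simp
  then have g_norm: "(\<integral>x. (cmod (g x))^2 \<partial>lborel) \<le> B"
    using LIMSEQ_le_const2[OF S_norm_conv, of B] by blast
  have "(\<lambda>N. \<integral>x. (cmod (g x - S N x))^2 \<partial>lborel) \<longlonglongrightarrow> (\<integral>(x::real). 0 \<partial>lborel)"
  proof (rule integral_dominated_convergence[where w="\<lambda>x. 4 * E x"
        and s="\<lambda>N x. (cmod (g x - S N x))^2" and f="\<lambda>x. 0"])
    show "AE x in lborel. (\<lambda>N. (cmod (g x - S N x))^2) \<longlonglongrightarrow> 0"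
      using AE_good
    proof eventually_elim
      case (elim x)
      have "(\<lambda>N. (cmod (g x - S N x))^2) \<longlonglongrightarrow> (cmod (g x - g x))^2"
        by (intro tendsto_intros S_conv[OF elim])
      then show ?case by simp
    qed
    show "AE x in lborel. norm ((cmod (g x - S N x))^2) \<le> 4 * E x" for N
      using AE_good
    proof eventually_elim
      case (elim x)
      have "(cmod (g x - S N x))^2 \<le> 2 * (cmod (g x))^2 + 2 * (cmod (S N x))^2"
        using norm_add_sq_le[of "g x" "- S N x"] by simp
      also have "\<dots> \<le> 4 * E x" using g_bound[OF elim] S_bound[OF elim, of N] by simp
      finally show ?case by simp
    qed
  qed (use dominating in auto)
  from tendsto_real_sqrt[OF this]
  have "(\<lambda>N. sqrt (\<integral>x. (cmod (g x - S N x))^2 \<partial>lborel)) \<longlonglongrightarrow> 0" by simp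
  moreover have "memLp 2 g" unfolding memLp_two_iff using g_integrable by simp
  moreover have "Lp_norm 2 g \<le> sqrt B" unfolding Lp_norm_two using g_norm by simp
  ultimately show ?thesis unfolding S_def Lp_norm_two by (intro exI[of _ g]) simp
qed

lemma semigroup_image_bound:
  assumes p: "2 \<le> p" and f: "memLp p f" and z: "0 < Re z"
  shows "\<exists>g. semigroup_image z f g \<and> Lp_norm 2 g \<le> sqrt 1300 * Lp_norm p f * Re z powr (- 1 / 2 + inv_exp p)"
proof -
  define s where "s = Re z"
  define N where "N = Lp_norm p f"
  define a where "a n = exp (- z * of_nat (2 * n + 1)) * hermite_coeff f n" for n
  have s: "0 < s" and N0: "0 \<le> N" unfolding s_def N_def using z Lp_norm_nonneg[OF f] by auto
  have norm_a: "cmod (a n) = exp (-(s * (2 * real n + 1))) * cmod (hermite_coeff f n)" for n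
    unfolding a_def s_def by (simp add: norm_mult algebra_simps)
  have summable: "summable (\<lambda>n. cmod (a n))"
  proof (rule summable_le_exp_mult_linear[OF s _ mult_nonneg_nonneg[OF _ N0]])
    show "cmod (a n) \<le> exp (-(s * (2 * real n + 1))) * (sqrt 15 * N * (real n + 2))" for n
      unfolding norm_a N_def using norm_hermite_coeff_le[OF p f, of n] by (intro mult_left_mono) auto
  qed auto
  have bound: "(\<Sum>n<M. (cmod (a n))^2) \<le> 1300 * N^2 * s powr (-1 + 2 * inv_exp p)" for M
  proof -
    have "(cmod (a n))^2 = exp (-(2 * s * (2 * real n + 1))) * (cmod (hermite_coeff f n))^2" for n
      unfolding norm_a by (simp add: power_mult_distrib power2_eq_square flip: exp_add)
    then show ?thesis unfolding N_def using damped_hermite_coeff_sum_le[OF p f s] by simp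
  qed
  obtain g where "memLp 2 g"
    and "(\<lambda>N. Lp_norm 2 (\<lambda>x. g x - (\<Sum>n<N. a n * complex_of_real (hermite_fun n x)))) \<longlonglongrightarrow> 0"
    and g_norm: "Lp_norm 2 g \<le> sqrt (1300 * N^2 * s powr (-1 + 2 * inv_exp p))"
    using hermite_series_L2_limit[OF summable bound] by blast
  then have "semigroup_image z f g" unfolding semigroup_image_def a_def by (simp add: mult.assoc)
  moreover note g_norm
  moreover have "sqrt (1300 * N^2 * s powr (-1 + 2 * inv_exp p)) = sqrt 1300 * N * s powr (- 1 / 2 + inv_exp p)"
  proof -
    have "sqrt (s powr (-1 + 2 * inv_exp p)) = s powr ((-1 + 2 * inv_exp p) / 2)"
      using s by (simp add: powr_half_sqrt_powr)
    also have "(-1 + 2 * inv_exp p) / 2 = - 1 / 2 + inv_exp p" by simp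
    finally show ?thesis using N0 by (simp add: real_sqrt_mult)
  qed
  ultimately show ?thesis unfolding s_def N_def by auto
qed

theorem lemma6p1:
  fixes \<gamma> :: real and p :: ereal
  assumes "\<gamma> > 0" and "2 \<le> p"
  shows "\<exists>C. \<forall>t>0. \<forall>f. memLp p f \<longrightarrow>
           (\<exists>g. semigroup_image ((\<i> + complex_of_real \<gamma>) * complex_of_real t) f g \<and>
                Lp_norm 2 g \<le> C * t powr (- 1 / 2 + inv_exp p) * Lp_norm p f)"
proof (intro exI[of _ "sqrt 1300 * \<gamma> powr (- 1 / 2 + inv_exp p)"] allI impI)
  fix t :: real and f :: "real \<Rightarrow> complex"
  assume t: "t > 0" and f: "memLp p f"
  let ?z = "(\<i> + complex_of_real \<gamma>) * complex_of_real t"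
  have "Re ?z = \<gamma> * t" by simp
  moreover have "(\<gamma> * t) powr (- 1 / 2 + inv_exp p) = \<gamma> powr (- 1 / 2 + inv_exp p) * t powr (- 1 / 2 + inv_exp p)"
    using assms(1) t by (simp add: powr_mult)
  ultimately show "\<exists>g. semigroup_image ?z f g \<and>
      Lp_norm 2 g \<le> sqrt 1300 * \<gamma> powr (- 1 / 2 + inv_exp p) * t powr (- 1 / 2 + inv_exp p) * Lp_norm p f"
    using semigroup_image_bound[OF assms(2) f, of ?z] assms(1) t by (simp add: mult_ac)
qed

end
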